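(* Let $q$ be a prime power, let $\lambda \in \mathbb{F}_{q^n}\setminus\mathbb{F}_q$, $t = [\mathbb{F}_q(\lambda):\mathbb{F}_q]$, let $\overline{S}$ be an $\mathbb{F}_{q^t}$-subspace of $\mathbb{F}_{q^n}$ of $\mathbb{F}_{q^t}$-dimension $l>0$, $b \in \mathbb{F}_{q^n}^*$ with $\mathbb{F}_{q^t}\cap b\overline{S}=\{0\}$, $0<m<t$, $k = tl+m$ with $t+1 \le k \le n$, and $S = \overline{S} \oplus b\langle 1, \lambda, \ldots, \lambda^{m-1}\rangle_{\mathbb{F}_q}$, with $Y=\langle S\rangle_{\mathbb{F}_{q^t}} = \mathbb{F}_{q^n}$ and $2m \ge t-1$. Suppose $\mathcal{C}=\mathrm{Orb}(S)$ is an $r$-FWS code with $r = 2m+t(l-1)$, and that $r = tl-1$ (i.e. $2m = t-1$). Then \[ \omega_{2i}(\mathcal{C}) = \begin{cases} (q + 1)q^{2i-1}, & \text{if } i \in \{1, \ldots, m - 1\}, \\ \frac{q^t - q^{2m-1}}{q - 1}, & \text{if } i = m, \\ \frac{q^n - q^t}{q - 1}, & \text{if } i = m + 1. \end{cases} \]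
   Context: $\mathrm{Orb}(S)=\{\alpha S:\alpha\in\mathbb{F}_{q^n}^*\}$; $d(U,V)=2k-2\dim_{\mathbb{F}_q}(U\cap V)$; the weight distribution is $\omega_{2i}(\mathcal{C})=|\{\alpha S: \alpha\in\mathbb{F}_{q^n}^*, d(S,\alpha S)=2i\}|$ for $i=1,\dots,k$. $\mathcal{C}$ is an $r$-FWS code if $\omega_{2i}=0$ for $i=k-r+1,\ldots,k$ and $\omega_{2i}\neq 0$ for all $i=1,\ldots,k-r$. $\langle S\rangle_{\mathbb{F}_{q^t}}$ denotes the $\mathbb{F}_{q^t}$-span of $S$. *)

theory Defs
  imports Complex_Main "HOL-Computational_Algebra.Primes"
begin

text \<open>Finite field F_{q^n} is modelled as a finite field type 'a; subfields and
  subspaces over a subfield K are subsets of 'a.\<close>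

definition is_subfield :: "'a::field set \<Rightarrow> bool" where
  "is_subfield F \<longleftrightarrow> 0 \<in> F \<and> 1 \<in> F \<and> (\<forall>x\<in>F. \<forall>y\<in>F. x + y \<in> F \<and> x * y \<in> F)
     \<and> (\<forall>x\<in>F. - x \<in> F) \<and> (\<forall>x\<in>F. x \<noteq> 0 \<longrightarrow> inverse x \<in> F)"

definition field_adjoin :: "'a::field set \<Rightarrow> 'a \<Rightarrow> 'a set" where
  "field_adjoin K a = \<Inter>{F. is_subfield F \<and> K \<subseteq> F \<and> a \<in> F}"

definition is_subspace :: "'a::field set \<Rightarrow> 'a set \<Rightarrow> bool" where
  "is_subspace K V \<longleftrightarrow> 0 \<in> V \<and> (\<forall>x\<in>V. \<forall>y\<in>V. x + y \<in> V) \<and> (\<forall>c\<in>K. \<forall>x\<in>V. c * x \<in> V)"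

definition span_over :: "'a::field set \<Rightarrow> 'a set \<Rightarrow> 'a set" where
  "span_over K A = {(\<Sum>a\<in>B. c a * a) | B c. finite B \<and> B \<subseteq> A \<and> (\<forall>a\<in>B. c a \<in> K)}"

definition indep_over :: "'a::field set \<Rightarrow> 'a set \<Rightarrow> bool" where
  "indep_over K B \<longleftrightarrow> (\<forall>c. (\<forall>b\<in>B. c b \<in> K) \<longrightarrow> (\<Sum>b\<in>B. c b * b) = 0 \<longrightarrow> (\<forall>b\<in>B. c b = 0))"

definition dim_over :: "'a::field set \<Rightarrow> 'a set \<Rightarrow> nat" where
  "dim_over K V = (THE d. \<exists>B. B \<subseteq> V \<and> finite B \<and> indep_over K B \<and> span_over K B = V \<and> card B = d)"

definition Orb :: "'a::field set \<Rightarrow> 'a set set" where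
  "Orb S = {(\<lambda>x. \<alpha> * x) ` S | \<alpha>. \<alpha> \<noteq> 0}"

definition subspace_dist :: "'a::field set \<Rightarrow> nat \<Rightarrow> 'a set \<Rightarrow> 'a set \<Rightarrow> nat" where
  "subspace_dist K k U V = 2 * k - 2 * dim_over K (U \<inter> V)"

text \<open>omega_{2i}(Orb S) = number of orbit elements alpha S with d(S, alpha S) = 2i.\<close>
definition weight :: "'a::field set \<Rightarrow> nat \<Rightarrow> 'a set \<Rightarrow> nat \<Rightarrow> nat" where
  "weight K k S i = card {V \<in> Orb S. subspace_dist K k S V = 2 * i}"

definition is_FWS :: "'a::field set \<Rightarrow> nat \<Rightarrow> 'a set \<Rightarrow> nat \<Rightarrow> bool" where
  "is_FWS K k S r \<longleftrightarrow> (\<forall>i\<in>{k - r + 1..k}. weight K k S i = 0) \<and> (\<forall>i\<in>{1..k - r}. weight K k S i \<noteq> 0)"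

end

theory Submission
  imports Defs "HOL-Computational_Algebra.Polynomial" "HOL-Library.FuncSet"
begin

text \<open>Write \<open>L = Fq(lam)\<close>, \<open>W = \<langle>1, lam, \<dots>, lam ^ (m - 1)\<rangle>\<close> and \<open>S = Sbar \<oplus> b W\<close>.
  For \<open>\<alpha> \<in> L\<^sup>*\<close> one has \<open>S \<inter> \<alpha> S = Sbar \<oplus> b (W \<inter> \<alpha> W)\<close>, and \<open>W \<inter> \<alpha> W\<close> has
  dimension \<open>m - j\<close>, where j is the least degree such that \<open>\<alpha> = u / v\<close> with u, v polynomials
  in lam of degree at most j; this uses that two polynomials of degree below \<open>t = [L : Fq]\<close>
  agreeing at lam are equal. Counting the pairs \<open>(u, v)\<close> of nonzero elements of
  \<open>\<langle>1, \<dots>, lam ^ (N - 1)\<rangle>\<close> by their quotient gives, for \<open>N = 1, \<dots>, m\<close>, a triangular system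
  for the number of \<open>\<alpha>\<close> of each degree j, whose solution is \<open>(q\<^sup>2 - 1) q ^ (2 j - 1)\<close> for
  \<open>0 < j < m\<close>. For \<open>\<alpha> \<notin> L\<close>, \<open>\<alpha> Sbar \<noteq> Sbar\<close>, because the stabiliser of Sbar would be a
  field strictly between L and the whole field whose degree over L divides both l and \<open>l + 1\<close>;
  two index estimates then give \<open>dim (S \<inter> \<alpha> S) \<le> t l - 1\<close>, and the FWS hypothesis forces
  equality. Finally each code word \<open>\<alpha> S\<close> arises from exactly \<open>q - 1\<close> multipliers \<open>\<alpha>\<close>.\<close>

section \<open>Subfields, subspaces and dimension\<close>

context
  fixes K :: "'a::field set"
  assumes K: "is_subfield K"
begin

lemma is_subfield_0: "0 \<in> K"
  using K unfolding is_subfield_def by auto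

lemma is_subfield_1: "1 \<in> K"
  using K unfolding is_subfield_def by auto

lemma is_subfield_add: "x \<in> K \<Longrightarrow> y \<in> K \<Longrightarrow> x + y \<in> K"
  using K unfolding is_subfield_def by auto

lemma is_subfield_mult: "x \<in> K \<Longrightarrow> y \<in> K \<Longrightarrow> x * y \<in> K"
  using K unfolding is_subfield_def by auto

lemma is_subfield_uminus: "x \<in> K \<Longrightarrow> - x \<in> K"
  using K unfolding is_subfield_def by auto

lemma is_subfield_inverse: "x \<in> K \<Longrightarrow> inverse x \<in> K"
  using K unfolding is_subfield_def by (cases "x = 0") auto

lemma is_subfield_diff: "x \<in> K \<Longrightarrow> y \<in> K \<Longrightarrow> x - y \<in> K"
  using is_subfield_add[of x "- y"] is_subfield_uminus[of y] by simp

lemma is_subfield_divide: "x \<in> K \<Longrightarrow> y \<in> K \<Longrightarrow> x / y \<in> K"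
  using is_subfield_mult[of x "inverse y"] is_subfield_inverse[of y] by (simp add: divide_inverse)

lemma is_subfield_sum: "(\<And>i. i \<in> A \<Longrightarrow> f i \<in> K) \<Longrightarrow> sum f A \<in> K"
  by (induction A rule: infinite_finite_induct) (auto simp: is_subfield_0 is_subfield_add)

lemma is_subfield_power: "x \<in> K \<Longrightarrow> x ^ n \<in> K"
  by (induction n) (auto simp: is_subfield_1 is_subfield_mult)

lemma is_subspace_subfield: "is_subfield F \<Longrightarrow> K \<subseteq> F \<Longrightarrow> is_subspace K F"
  unfolding is_subfield_def is_subspace_def by auto

lemma is_subspace_uminus: "is_subspace K V \<Longrightarrow> x \<in> V \<Longrightarrow> - x \<in> V"
  using is_subfield_uminus[OF is_subfield_1] unfolding is_subspace_def by (metis mult_minus1)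

lemma is_subspace_diff: "is_subspace K V \<Longrightarrow> x \<in> V \<Longrightarrow> y \<in> V \<Longrightarrow> x - y \<in> V"
  using is_subspace_uminus[of V y] unfolding is_subspace_def by (metis diff_conv_add_uminus)

lemma span_over_superset: "a \<in> A \<Longrightarrow> a \<in> span_over K A"
  unfolding span_over_def
  by (rule CollectI, rule exI[of _ "{a}"], rule exI[of _ "\<lambda>_. 1"]) (auto simp: is_subfield_1)

lemma is_subspace_span_over: "is_subspace K (span_over K A)"
  unfolding is_subspace_def
proof (intro conjI ballI)
  show "0 \<in> span_over K A"
    unfolding span_over_def by (rule CollectI, rule exI[of _ "{}"]) auto
next
  fix x y assume "x \<in> span_over K A" "y \<in> span_over K A"
  then obtain B1 c1 B2 c2
    where x: "x = (\<Sum>a\<in>B1. c1 a * a)" "finite B1" "B1 \<subseteq> A" "\<forall>a\<in>B1. c1 a \<in> K"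
      and y: "y = (\<Sum>a\<in>B2. c2 a * a)" "finite B2" "B2 \<subseteq> A" "\<forall>a\<in>B2. c2 a \<in> K"
    unfolding span_over_def by blast
  define c where "c a = (if a \<in> B1 then c1 a else 0) + (if a \<in> B2 then c2 a else 0)" for a
  have "x = (\<Sum>a\<in>B1 \<union> B2. if a \<in> B1 then c1 a * a else 0)"
    using x y by (simp add: sum.If_cases Int_absorb1)
  moreover have "y = (\<Sum>a\<in>B1 \<union> B2. if a \<in> B2 then c2 a * a else 0)"
    using x y by (simp add: sum.If_cases Int_absorb1)
  ultimately have "x + y = (\<Sum>a\<in>B1 \<union> B2. c a * a)"
    by (simp add: sum.distrib[symmetric]) (intro sum.cong, auto simp: c_def distrib_right)
  moreover have "\<forall>a\<in>B1 \<union> B2. c a \<in> K"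
    using x y by (auto simp: c_def is_subfield_add is_subfield_0)
  ultimately show "x + y \<in> span_over K A"
    unfolding span_over_def using x y by (intro CollectI exI[of _ "B1 \<union> B2"] exI[of _ c]) auto
next
  fix a x assume a: "a \<in> K" and "x \<in> span_over K A"
  then obtain B c where x: "x = (\<Sum>b\<in>B. c b * b)" "finite B" "B \<subseteq> A" "\<forall>b\<in>B. c b \<in> K"
    unfolding span_over_def by blast
  have "a * x = (\<Sum>b\<in>B. (a * c b) * b)"
    using x by (simp add: sum_distrib_left mult.assoc)
  moreover have "\<forall>b\<in>B. a * c b \<in> K"
    using x a by (auto simp: is_subfield_mult)
  ultimately show "a * x \<in> span_over K A"
    unfolding span_over_def using x by (intro CollectI exI[of _ B] exI[of _ "\<lambda>b. a * c b"]) auto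
qed

lemma span_over_eq_image_PiE:
  assumes "finite B"
  shows "span_over K B = (\<lambda>c. \<Sum>a\<in>B. c a * a) ` (B \<rightarrow>\<^sub>E K)"
proof
  show "(\<lambda>c. \<Sum>a\<in>B. c a * a) ` (B \<rightarrow>\<^sub>E K) \<subseteq> span_over K B"
    unfolding span_over_def using assms by (auto simp: PiE_def Pi_def)
next
  show "span_over K B \<subseteq> (\<lambda>c. \<Sum>a\<in>B. c a * a) ` (B \<rightarrow>\<^sub>E K)"
  proof
    fix z assume "z \<in> span_over K B"
    then obtain B' c where z: "z = (\<Sum>a\<in>B'. c a * a)" "B' \<subseteq> B" "\<forall>a\<in>B'. c a \<in> K"
      unfolding span_over_def by blast
    define c' where "c' a = (if a \<in> B then if a \<in> B' then c a else 0 else undefined)" for a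
    have c': "c' \<in> B \<rightarrow>\<^sub>E K"
      using z is_subfield_0 by (auto simp: c'_def)
    have "(\<Sum>a\<in>B. c' a * a) = (\<Sum>a\<in>B. if a \<in> B' then c a * a else 0)"
      unfolding c'_def by (intro sum.cong) auto
    also have "\<dots> = (\<Sum>a\<in>B \<inter> B'. c a * a)"
      using assms by (simp add: sum.inter_restrict)
    also have "B \<inter> B' = B'"
      using z by blast
    finally have "(\<Sum>a\<in>B. c' a * a) = z"
      using z by simp
    with c' show "z \<in> (\<lambda>c. \<Sum>a\<in>B. c a * a) ` (B \<rightarrow>\<^sub>E K)"
      by blast
  qed
qed

end

lemma is_subspace_0: "is_subspace K V \<Longrightarrow> 0 \<in> V"
  unfolding is_subspace_def by blast

lemma is_subspace_add: "is_subspace K V \<Longrightarrow> x \<in> V \<Longrightarrow> y \<in> V \<Longrightarrow> x + y \<in> V"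
  unfolding is_subspace_def by blast

lemma is_subspace_scale: "is_subspace K V \<Longrightarrow> c \<in> K \<Longrightarrow> x \<in> V \<Longrightarrow> c * x \<in> V"
  unfolding is_subspace_def by blast

lemma is_subspace_sum: "is_subspace K V \<Longrightarrow> (\<And>i. i \<in> A \<Longrightarrow> f i \<in> V) \<Longrightarrow> sum f A \<in> V"
  by (induction A rule: infinite_finite_induct) (auto simp: is_subspace_0 is_subspace_add)

lemma is_subspace_Int: "is_subspace K U \<Longrightarrow> is_subspace K V \<Longrightarrow> is_subspace K (U \<inter> V)"
  unfolding is_subspace_def by auto

lemma is_subspace_subset_scalars: "K \<subseteq> L \<Longrightarrow> is_subspace L V \<Longrightarrow> is_subspace K V"
  unfolding is_subspace_def by blast

lemma is_subspace_mult_image: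
  assumes V: "is_subspace K V"
  shows "is_subspace K ((\<lambda>x. \<alpha> * x) ` V)"
  unfolding is_subspace_def
proof (intro conjI ballI)
  show "0 \<in> (\<lambda>x. \<alpha> * x) ` V"
    using is_subspace_0[OF V] by (intro image_eqI[of _ _ 0]) auto
next
  fix y z assume "y \<in> (\<lambda>x. \<alpha> * x) ` V" "z \<in> (\<lambda>x. \<alpha> * x) ` V"
  then obtain y' z' where "y' \<in> V" "z' \<in> V" "y = \<alpha> * y'" "z = \<alpha> * z'" by blast
  then show "y + z \<in> (\<lambda>x. \<alpha> * x) ` V"
    using is_subspace_add[OF V] by (intro image_eqI[of _ _ "y' + z'"]) (auto simp: distrib_left)
next
  fix c y assume "c \<in> K" "y \<in> (\<lambda>x. \<alpha> * x) ` V"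
  then obtain y' where "y' \<in> V" "y = \<alpha> * y'" by blast
  then show "c * y \<in> (\<lambda>x. \<alpha> * x) ` V"
    using is_subspace_scale[OF V \<open>c \<in> K\<close>] by (intro image_eqI[of _ _ "c * y'"]) (auto simp: mult.left_commute)
qed

lemma span_over_minimal: "is_subspace K V \<Longrightarrow> A \<subseteq> V \<Longrightarrow> span_over K A \<subseteq> V"
  unfolding span_over_def by (auto intro!: is_subspace_sum is_subspace_scale)

lemma is_subfield_card_ge_2:
  fixes K :: "'a::{field,finite} set"
  assumes "is_subfield K"
  shows "card K \<ge> 2"
proof -
  have "card {0::'a, 1} \<le> card K"
    using is_subfield_0[OF assms] is_subfield_1[OF assms] by (intro card_mono) auto
  then show ?thesis by simp
qed

lemma is_subfieldI_finite:
  fixes R :: "'a::{field,finite} set"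
  assumes "0 \<in> R" "1 \<in> R" and add: "\<And>x y. x \<in> R \<Longrightarrow> y \<in> R \<Longrightarrow> x + y \<in> R"
    and mult: "\<And>x y. x \<in> R \<Longrightarrow> y \<in> R \<Longrightarrow> x * y \<in> R"
    and uminus: "\<And>x. x \<in> R \<Longrightarrow> - x \<in> R"
  shows "is_subfield R"
proof -
  have inverse: "inverse x \<in> R" if "x \<in> R" "x \<noteq> 0" for x
  proof -
    have "(\<lambda>y. x * y) ` R = R"
      by (rule endo_inj_surj) (auto intro: mult[OF \<open>x \<in> R\<close>] inj_onI simp: \<open>x \<noteq> 0\<close>)
    then obtain y where "y \<in> R" "x * y = 1"
      using \<open>1 \<in> R\<close> by (metis imageE)
    then show ?thesis
      using \<open>x \<noteq> 0\<close> by (metis inverse_unique)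
  qed
  show ?thesis
    unfolding is_subfield_def using assms(1,2) by (simp add: add mult uminus inverse)
qed

context
  fixes K :: "'a::{field,finite} set"
  assumes K: "is_subfield K"
begin

lemma card_span_over_indep:
  assumes "finite B" and "indep_over K B"
  shows "card (span_over K B) = card K ^ card B"
proof -
  have inj: "inj_on (\<lambda>c. \<Sum>a\<in>B. c a * a) (B \<rightarrow>\<^sub>E K)"
  proof (rule inj_onI)
    fix c1 c2 assume c: "c1 \<in> B \<rightarrow>\<^sub>E K" "c2 \<in> B \<rightarrow>\<^sub>E K"
      and "(\<Sum>a\<in>B. c1 a * a) = (\<Sum>a\<in>B. c2 a * a)"
    then have "(\<Sum>a\<in>B. (c1 a - c2 a) * a) = 0"
      by (simp add: sum_subtractf left_diff_distrib)
    moreover have "\<forall>a\<in>B. c1 a - c2 a \<in> K"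
      using c by (auto intro: is_subfield_diff[OF K])
    ultimately have "\<forall>a\<in>B. c1 a - c2 a = 0"
      using \<open>indep_over K B\<close> unfolding indep_over_def by (elim allE[of _ "\<lambda>a. c1 a - c2 a"]) auto
    then show "c1 = c2"
      using c by (intro ext) (metis PiE_arb eq_iff_diff_eq_0)
  qed
  have "card (span_over K B) = card (B \<rightarrow>\<^sub>E K)"
    using card_image[OF inj] span_over_eq_image_PiE[OF K assms(1)] by simp
  also have "\<dots> = card K ^ card B"
    using \<open>finite B\<close> by (simp add: card_PiE)
  finally show ?thesis .
qed

lemma span_over_if_insert_dependent:
  assumes indep: "indep_over K B" and dep: "\<not> indep_over K (insert v B)" and "v \<notin> B"
  shows "v \<in> span_over K B"
proof -
  obtain c where c: "\<forall>b\<in>insert v B. c b \<in> K" "(\<Sum>b\<in>insert v B. c b * b) = 0"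
      "\<exists>b\<in>insert v B. c b \<noteq> 0"
    using dep unfolding indep_over_def by blast
  have sum_B: "c v * v + (\<Sum>b\<in>B. c b * b) = 0"
    using c(2) \<open>v \<notin> B\<close> by simp
  have "c v \<noteq> 0"
  proof
    assume "c v = 0"
    then have "(\<Sum>b\<in>B. c b * b) = 0"
      using sum_B by simp
    then have "\<forall>b\<in>B. c b = 0"
      using indep c(1) unfolding indep_over_def by blast
    then show False
      using c(3) \<open>c v = 0\<close> by auto
  qed
  have "(\<Sum>b\<in>B. (- (c b / c v)) * b) = - (1 / c v) * (\<Sum>b\<in>B. c b * b)"
    by (simp add: sum_distrib_left)
  also have "(\<Sum>b\<in>B. c b * b) = - (c v * v)"
    using sum_B by (simp add: eq_neg_iff_add_eq_0 add.commute)
  finally have "v = (\<Sum>b\<in>B. (- (c b / c v)) * b)"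
    using \<open>c v \<noteq> 0\<close> by simp
  moreover have "\<forall>b\<in>B. - (c b / c v) \<in> K"
    using c(1) by (auto intro!: is_subfield_uminus[OF K] is_subfield_divide[OF K])
  ultimately show ?thesis
    unfolding span_over_def by (intro CollectI exI[of _ B] exI[of _ "\<lambda>b. - (c b / c v)"]) auto
qed

lemma is_subspace_has_basis:
  assumes V: "is_subspace K V"
  shows "\<exists>B. B \<subseteq> V \<and> indep_over K B \<and> span_over K B = V"
proof -
  define C where "C = {B. B \<subseteq> V \<and> indep_over K B}"
  have "{} \<in> C"
    unfolding C_def indep_over_def by auto
  moreover have "card B' < Suc (card (UNIV :: 'a set))" for B' :: "'a set"
    using card_mono[of UNIV B'] by simp
  ultimately have "\<exists>B. B \<in> C \<and> (\<forall>B'. B' \<in> C \<longrightarrow> card B' \<le> card B)"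
    by (intro Lattices_Big.ex_has_greatest_nat[where b = "Suc (card (UNIV :: 'a set))"]) auto
  then obtain B where "B \<in> C" and B_max: "\<And>B'. B' \<in> C \<Longrightarrow> card B' \<le> card B"
    by blast
  then have "B \<subseteq> V" and indep: "indep_over K B"
    unfolding C_def by auto
  have "V \<subseteq> span_over K B"
  proof
    fix v assume "v \<in> V"
    show "v \<in> span_over K B"
    proof (cases "v \<in> B")
      case True
      then show ?thesis
        by (rule span_over_superset[OF K])
    next
      case False
      then have "insert v B \<notin> C"
        using B_max[of "insert v B"] by force
      then have "\<not> indep_over K (insert v B)"
        using \<open>v \<in> V\<close> \<open>B \<subseteq> V\<close> unfolding C_def by blast
      then show ?thesis
        using span_over_if_insert_dependent[OF indep _ False] by blast
    qed
  qed
  then show ?thesis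
    using span_over_minimal[OF V \<open>B \<subseteq> V\<close>] \<open>B \<subseteq> V\<close> indep by blast
qed

lemma card_is_subspace:
  assumes "is_subspace K V"
  shows "card V = card K ^ dim_over K V"
proof -
  obtain B where B: "B \<subseteq> V" "indep_over K B" "span_over K B = V"
    using is_subspace_has_basis[OF assms] by blast
  have card_V: "card V = card K ^ card B"
    using card_span_over_indep[OF _ B(2)] B(3) by simp
  have "dim_over K V = card B"
    unfolding dim_over_def
  proof (rule the_equality)
    fix d assume "\<exists>B'. B' \<subseteq> V \<and> finite B' \<and> indep_over K B' \<and> span_over K B' = V \<and> card B' = d"
    then obtain B' where "indep_over K B'" "span_over K B' = V" "card B' = d"
      by blast
    then have "card K ^ d = card K ^ card B"
      using card_span_over_indep[of B'] card_V by simp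
    then show "d = card B"
      using is_subfield_card_ge_2[OF K] by simp
  qed (use B in auto)
  then show ?thesis
    using card_V by simp
qed

lemma dim_over_eqI:
  assumes "is_subspace K V" and "card V = card K ^ d"
  shows "dim_over K V = d"
  using card_is_subspace[OF assms(1)] assms(2) is_subfield_card_ge_2[OF K]
  by simp

end

section \<open>Polynomials evaluated at lam\<close>

lemma is_subfield_field_adjoin: "is_subfield K \<Longrightarrow> is_subfield (field_adjoin K lam)"
  unfolding field_adjoin_def is_subfield_def by auto

lemma field_adjoin_base: "K \<subseteq> field_adjoin K lam"
  unfolding field_adjoin_def by auto

lemma field_adjoin_generator: "lam \<in> field_adjoin K lam"
  unfolding field_adjoin_def by auto

lemma field_adjoin_minimal: "is_subfield F \<Longrightarrow> K \<subseteq> F \<Longrightarrow> lam \<in> F \<Longrightarrow> field_adjoin K lam \<subseteq> F"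
  unfolding field_adjoin_def by auto

definition polys_over :: "'a::zero set \<Rightarrow> 'a poly set" where
  "polys_over K = {p. \<forall>i. coeff p i \<in> K}"

definition polys_below :: "'a::zero set \<Rightarrow> nat \<Rightarrow> 'a poly set" where
  "polys_below K d = {p \<in> polys_over K. \<forall>i\<ge>d. coeff p i = 0}"

definition power_span :: "'a::comm_semiring_1 set \<Rightarrow> 'a \<Rightarrow> nat \<Rightarrow> 'a set" where
  "power_span K lam d = (\<lambda>p. poly p lam) ` polys_below K d"

lemma polys_below_iff: "p \<in> polys_below K d \<longleftrightarrow> p \<in> polys_over K \<and> (p = 0 \<or> degree p < d)"
proof -
  have "(\<forall>i\<ge>d. coeff p i = 0) \<longleftrightarrow> p = 0 \<or> degree p < d"
  proof
    assume "\<forall>i\<ge>d. coeff p i = 0"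
    then show "p = 0 \<or> degree p < d"
      by (metis leading_coeff_0_iff not_le_imp_less)
  qed (auto simp: coeff_eq_0)
  then show ?thesis
    unfolding polys_below_def by simp
qed

lemma polys_below_mono: "d \<le> d' \<Longrightarrow> p \<in> polys_below K d \<Longrightarrow> p \<in> polys_below K d'"
  by (auto simp: polys_below_iff)

lemma poly_polys_below:
  fixes x :: "'a::comm_semiring_1"
  assumes "p \<in> polys_below K d"
  shows "poly p x = (\<Sum>i<d. coeff p i * x ^ i)"
proof (cases "p = 0")
  case False
  then have "degree p < d"
    using assms by (simp add: polys_below_iff)
  then have "(\<Sum>i<d. coeff p i * x ^ i) = (\<Sum>i\<le>degree p. coeff p i * x ^ i)"
    by (intro sum.mono_neutral_right) (auto simp: coeff_eq_0)
  then show ?thesis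
    by (simp add: poly_altdef)
qed simp

lemma restrict_coeff_image_polys_below:
  fixes K :: "'a::zero set"
  assumes "0 \<in> K"
  shows "(\<lambda>p. restrict (coeff p) {..<d}) ` polys_below K d = {..<d} \<rightarrow>\<^sub>E K"
proof
  show "(\<lambda>p. restrict (coeff p) {..<d}) ` polys_below K d \<subseteq> {..<d} \<rightarrow>\<^sub>E K"
  proof (rule image_subsetI)
    fix p assume "p \<in> polys_below K d"
    then show "restrict (coeff p) {..<d} \<in> {..<d} \<rightarrow>\<^sub>E K"
      unfolding restrict_PiE_iff polys_below_def polys_over_def by blast
  qed
next
  show "{..<d} \<rightarrow>\<^sub>E K \<subseteq> (\<lambda>p. restrict (coeff p) {..<d}) ` polys_below K d"
  proof
    fix g assume g: "g \<in> {..<d} \<rightarrow>\<^sub>E K"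
    define p where "p = Poly (map g [0..<d])"
    have coeff_p: "coeff p i = (if i < d then g i else 0)" for i
      unfolding p_def by (simp add: nth_default_def)
    have "p \<in> polys_below K d"
      unfolding polys_below_def polys_over_def
      using PiE_mem[OF g] assms by (auto simp: coeff_p)
    moreover have "restrict (coeff p) {..<d} = g"
    proof
      fix i show "restrict (coeff p) {..<d} i = g i"
        using PiE_arb[OF g, of i] by (cases "i < d") (simp_all add: coeff_p)
    qed
    ultimately show "g \<in> (\<lambda>p. restrict (coeff p) {..<d}) ` polys_below K d"
      by blast
  qed
qed

lemma card_polys_below:
  fixes K :: "'a::zero set"
  assumes "0 \<in> K"
  shows "card (polys_below K d) = card K ^ d"
proof -
  have inj: "inj_on (\<lambda>p. restrict (coeff p) {..<d}) (polys_below K d)"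
  proof (rule inj_onI)
    fix p r assume "p \<in> polys_below K d" "r \<in> polys_below K d"
      "restrict (coeff p) {..<d} = restrict (coeff r) {..<d}"
    then have "coeff p i = coeff r i" for i
      unfolding polys_below_def by (cases "i < d") (auto dest: fun_cong[of _ _ i])
    then show "p = r"
      by (rule poly_eqI)
  qed
  have "card (polys_below K d) = card ({..<d} \<rightarrow>\<^sub>E K)"
    using card_image[OF inj] restrict_coeff_image_polys_below[OF assms] by simp
  then show ?thesis
    by (simp add: card_PiE)
qed

context
  fixes K :: "'a::field set"
  assumes K: "is_subfield K"
begin

lemma polys_over_0: "0 \<in> polys_over K"
  unfolding polys_over_def using is_subfield_0[OF K] by simp

lemma polys_over_add: "p \<in> polys_over K \<Longrightarrow> r \<in> polys_over K \<Longrightarrow> p + r \<in> polys_over K"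
  unfolding polys_over_def by (auto intro: is_subfield_add[OF K])

lemma polys_over_diff: "p \<in> polys_over K \<Longrightarrow> r \<in> polys_over K \<Longrightarrow> p - r \<in> polys_over K"
  unfolding polys_over_def by (auto intro: is_subfield_diff[OF K])

lemma polys_over_mult: "p \<in> polys_over K \<Longrightarrow> r \<in> polys_over K \<Longrightarrow> p * r \<in> polys_over K"
  unfolding polys_over_def
  by (simp add: coeff_mult is_subfield_sum[OF K] is_subfield_mult[OF K])

lemma polys_over_smult: "c \<in> K \<Longrightarrow> p \<in> polys_over K \<Longrightarrow> smult c p \<in> polys_over K"
  unfolding polys_over_def by (auto intro: is_subfield_mult[OF K])

lemma polys_over_monom: "c \<in> K \<Longrightarrow> monom c n \<in> polys_over K"
  unfolding polys_over_def coeff_monom using is_subfield_0[OF K] by auto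

lemma polys_below_0: "0 \<in> polys_below K d"
  by (simp add: polys_below_iff polys_over_0)

lemma polys_below_add: "p \<in> polys_below K d \<Longrightarrow> r \<in> polys_below K d \<Longrightarrow> p + r \<in> polys_below K d"
  unfolding polys_below_def by (auto intro: polys_over_add)

lemma polys_below_diff: "p \<in> polys_below K d \<Longrightarrow> r \<in> polys_below K d \<Longrightarrow> p - r \<in> polys_below K d"
  unfolding polys_below_def by (auto intro: polys_over_diff)

lemma polys_below_smult: "c \<in> K \<Longrightarrow> p \<in> polys_below K d \<Longrightarrow> smult c p \<in> polys_below K d"
  unfolding polys_below_def by (auto intro: polys_over_smult)

lemma polys_below_monom: "c \<in> K \<Longrightarrow> j < d \<Longrightarrow> monom c j \<in> polys_below K d"
  unfolding polys_below_def by (auto intro: polys_over_monom)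

lemma polys_below_mult:
  "p \<in> polys_below K a \<Longrightarrow> r \<in> polys_below K b \<Longrightarrow> p * r \<in> polys_below K (a + b - 1)"
  using degree_mult_le[of p r] by (auto simp: polys_below_iff polys_over_mult)

lemma is_subspace_power_span: "is_subspace K (power_span K lam d)"
  unfolding is_subspace_def power_span_def
proof (intro conjI ballI)
  show "0 \<in> (\<lambda>p. poly p lam) ` polys_below K d"
    using polys_below_0 by force
next
  fix x y assume "x \<in> (\<lambda>p. poly p lam) ` polys_below K d" "y \<in> (\<lambda>p. poly p lam) ` polys_below K d"
  then obtain p r where "p \<in> polys_below K d" "r \<in> polys_below K d" "x = poly p lam" "y = poly r lam"
    by blast
  then show "x + y \<in> (\<lambda>p. poly p lam) ` polys_below K d"
    by (intro image_eqI[of _ _ "p + r"]) (auto simp: polys_below_add)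
next
  fix c x assume "c \<in> K" "x \<in> (\<lambda>p. poly p lam) ` polys_below K d"
  then obtain p where "p \<in> polys_below K d" "x = poly p lam"
    by blast
  then show "c * x \<in> (\<lambda>p. poly p lam) ` polys_below K d"
    using \<open>c \<in> K\<close> by (intro image_eqI[of _ _ "smult c p"]) (auto simp: polys_below_smult)
qed

lemma power_span_eq_span_over: "power_span K lam d = span_over K {lam ^ j | j. j < d}"
proof
  show "power_span K lam d \<subseteq> span_over K {lam ^ j | j. j < d}"
  proof
    fix x assume "x \<in> power_span K lam d"
    then obtain p where p: "p \<in> polys_below K d" "x = poly p lam"
      unfolding power_span_def by blast
    have "(\<Sum>i<d. coeff p i * lam ^ i) \<in> span_over K {lam ^ j | j. j < d}"
    proof (rule is_subspace_sum[OF is_subspace_span_over[OF K]])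
      fix i assume "i \<in> {..<d}"
      then have "lam ^ i \<in> span_over K {lam ^ j | j. j < d}"
        by (intro span_over_superset[OF K]) auto
      moreover have "coeff p i \<in> K"
        using p unfolding polys_below_def polys_over_def by blast
      ultimately show "coeff p i * lam ^ i \<in> span_over K {lam ^ j | j. j < d}"
        by (rule is_subspace_scale[OF is_subspace_span_over[OF K], rotated])
    qed
    then show "x \<in> span_over K {lam ^ j | j. j < d}"
      using p poly_polys_below[OF p(1)] by simp
  qed
next
  have "lam ^ j \<in> power_span K lam d" if "j < d" for j
    unfolding power_span_def using is_subfield_1[OF K] that
    by (intro image_eqI[of _ _ "monom 1 j"]) (auto simp: poly_monom polys_below_monom)
  then show "span_over K {lam ^ j | j. j < d} \<subseteq> power_span K lam d"
    by (intro span_over_minimal[OF is_subspace_power_span]) blast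
qed

lemma power_span_mono: "d \<le> d' \<Longrightarrow> power_span K lam d \<subseteq> power_span K lam d'"
  unfolding power_span_def using polys_below_mono by blast

lemma power_span_1: "power_span K lam 1 = K"
proof
  show "power_span K lam 1 \<subseteq> K"
  proof
    fix x assume "x \<in> power_span K lam 1"
    then obtain p where "p \<in> polys_below K 1" "x = poly p lam"
      unfolding power_span_def by blast
    then show "x \<in> K"
      using poly_polys_below[of p K 1 lam] by (simp add: polys_below_def polys_over_def)
  qed
  show "K \<subseteq> power_span K lam 1"
  proof
    fix c assume "c \<in> K"
    then have "[:c:] \<in> polys_below K 1"
      using is_subfield_0[OF K] by (auto simp: polys_below_def polys_over_def coeff_pCons split: nat.split)
    then show "c \<in> power_span K lam 1"
      unfolding power_span_def by (intro image_eqI[of _ _ "[:c:]"]) auto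
  qed
qed

lemma power_span_subset_field_adjoin: "power_span K lam d \<subseteq> field_adjoin K lam"
proof -
  have L: "is_subfield (field_adjoin K lam)"
    by (rule is_subfield_field_adjoin[OF K])
  have "poly p lam \<in> field_adjoin K lam" if "p \<in> polys_below K d" for p
    unfolding poly_polys_below[OF that] using that field_adjoin_base[of K lam]
    by (intro is_subfield_sum[OF L] is_subfield_mult[OF L] is_subfield_power[OF L]
        field_adjoin_generator) (auto simp: polys_below_def polys_over_def)
  then show ?thesis
    unfolding power_span_def by blast
qed

end

lemma finite_polys_below:
  fixes K :: "'a::{field,finite} set"
  assumes "is_subfield K"
  shows "finite (polys_below K d)"
proof -
  have "card (polys_below K d) = card K ^ d"
    by (rule card_polys_below[OF is_subfield_0[OF assms]])
  then show ?thesis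
    using is_subfield_card_ge_2[OF assms] by (intro card_ge_0_finite) simp
qed

context
  fixes K :: "'a::{field,finite} set" and lam :: 'a and p :: "'a poly"
  assumes K: "is_subfield K" and p: "p \<in> polys_over K" "p \<noteq> 0" "poly p lam = 0"
begin

text \<open>Reducing \<open>lam * x\<close> modulo the annihilating polynomial p keeps the degree below that of p.\<close>

lemma lam_mult_power_span:
  assumes "x \<in> power_span K lam (degree p)"
  shows "lam * x \<in> power_span K lam (degree p)"
proof -
  let ?d = "degree p"
  obtain r where r: "r \<in> polys_below K ?d" "x = poly r lam"
    using assms unfolding power_span_def by blast
  define c where "c = coeff (pCons 0 r) ?d / lead_coeff p"
  define r' where "r' = pCons 0 r - smult c p"
  have "pCons 0 r \<in> polys_over K"
    using r(1) is_subfield_0[OF K]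
    by (auto simp: polys_below_def polys_over_def coeff_pCons split: nat.split)
  moreover have "c \<in> K"
    unfolding c_def using calculation p(1) by (auto simp: polys_over_def intro: is_subfield_divide[OF K])
  ultimately have "r' \<in> polys_over K"
    unfolding r'_def using p(1) by (intro polys_over_diff[OF K] polys_over_smult[OF K])
  moreover have "coeff r' i = 0" if "i \<ge> ?d" for i
  proof (cases "i = ?d")
    case True
    then show ?thesis
      using p(2) by (simp add: r'_def c_def)
  next
    case False
    with that have "coeff r (i - 1) = 0" "coeff p i = 0"
      using r(1) by (auto simp: polys_below_def coeff_eq_0)
    then show ?thesis
      using False that by (cases i) (auto simp: r'_def)
  qed
  ultimately have "r' \<in> polys_below K ?d"
    by (simp add: polys_below_def)
  moreover have "poly r' lam = lam * x"
    using p(3) r(2) by (simp add: r'_def)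
  ultimately show ?thesis
    unfolding power_span_def by (metis image_eqI)
qed

lemma is_subfield_power_span:
  assumes "degree p > 0"
  shows "is_subfield (power_span K lam (degree p))"
proof -
  let ?R = "power_span K lam (degree p)"
  have R: "is_subspace K ?R"
    by (rule is_subspace_power_span[OF K])
  have "K \<subseteq> ?R"
    using power_span_1[OF K, of lam] power_span_mono[OF K, of 1 "degree p" lam] assms by simp
  then have "1 \<in> ?R"
    using is_subfield_1[OF K] by blast
  have pow: "lam ^ j * y \<in> ?R" if "y \<in> ?R" for j y
    using that by (induction j) (auto simp: mult.assoc dest: lam_mult_power_span)
  have "x * y \<in> ?R" if "x \<in> ?R" "y \<in> ?R" for x y
  proof -
    obtain r where r: "r \<in> polys_below K (degree p)" "x = poly r lam"
      using \<open>x \<in> ?R\<close> unfolding power_span_def by blast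
    have "x * y = (\<Sum>i<degree p. coeff r i * (lam ^ i * y))"
      using poly_polys_below[OF r(1)] r(2) by (simp add: sum_distrib_right mult.assoc)
    also have "\<dots> \<in> ?R"
    proof (rule is_subspace_sum[OF R])
      fix i
      have "coeff r i \<in> K"
        using r(1) by (simp add: polys_below_def polys_over_def)
      then show "coeff r i * (lam ^ i * y) \<in> ?R"
        by (rule is_subspace_scale[OF R _ pow[OF \<open>y \<in> ?R\<close>]])
    qed
    finally show ?thesis .
  qed
  then show ?thesis
    using is_subfieldI_finite is_subspace_0[OF R] \<open>1 \<in> ?R\<close> is_subspace_add[OF R]
      is_subspace_uminus[OF K R] by metis
qed

lemma card_field_adjoin_le_degree: "card (field_adjoin K lam) \<le> card K ^ degree p"
proof -
  have "degree p > 0"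
  proof (rule ccontr)
    assume "\<not> degree p > 0"
    then obtain a where "p = [:a:]"
      by (metis degree_eq_zeroE gr0I)
    then show False
      using p(2,3) by simp
  qed
  let ?R = "power_span K lam (degree p)"
  have "K \<subseteq> ?R"
    using power_span_1[OF K, of lam] power_span_mono[OF K, of 1 "degree p" lam] \<open>degree p > 0\<close>
    by simp
  moreover have "lam \<in> ?R"
    using lam_mult_power_span[of 1] \<open>K \<subseteq> ?R\<close> is_subfield_1[OF K] by auto
  ultimately have "field_adjoin K lam \<subseteq> ?R"
    by (intro field_adjoin_minimal is_subfield_power_span \<open>degree p > 0\<close>)
  then have "card (field_adjoin K lam) \<le> card ?R"
    by (intro card_mono) auto
  also have "\<dots> \<le> card (polys_below K (degree p))"
    unfolding power_span_def by (rule card_image_le[OF finite_polys_below[OF K]])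
  also have "\<dots> = card K ^ degree p"
    by (rule card_polys_below[OF is_subfield_0[OF K]])
  finally show ?thesis .
qed

end

context
  fixes K :: "'a::{field,finite} set" and lam :: 'a and t :: nat
  assumes K: "is_subfield K" and card_L: "card (field_adjoin K lam) = card K ^ t"
begin

lemma poly_eq_0_if_in_polys_below:
  assumes "p \<in> polys_below K t" and "poly p lam = 0"
  shows "p = 0"
proof (rule ccontr)
  assume "p \<noteq> 0"
  then have "card K ^ t \<le> card K ^ degree p"
    using card_field_adjoin_le_degree[OF K _ _ assms(2)] assms(1) card_L by (simp add: polys_below_iff)
  moreover have "degree p < t"
    using assms(1) \<open>p \<noteq> 0\<close> by (simp add: polys_below_iff)
  ultimately show False
    using is_subfield_card_ge_2[OF K] by simp
qed

lemma inj_on_poly_polys_below: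
  assumes "d \<le> t"
  shows "inj_on (\<lambda>p. poly p lam) (polys_below K d)"
proof (rule inj_onI)
  fix p r assume "p \<in> polys_below K d" "r \<in> polys_below K d" "poly p lam = poly r lam"
  then have "p - r \<in> polys_below K d" "poly (p - r) lam = 0"
    using polys_below_diff[OF K] by auto
  then have "p - r \<in> polys_below K t" "poly (p - r) lam = 0"
    using polys_below_mono[OF assms] by auto
  then have "p - r = 0"
    by (rule poly_eq_0_if_in_polys_below)
  then show "p = r"
    by simp
qed

lemma card_power_span: "d \<le> t \<Longrightarrow> card (power_span K lam d) = card K ^ d"
  unfolding power_span_def
  by (simp add: card_image inj_on_poly_polys_below card_polys_below is_subfield_0[OF K])

end

section \<open>Quotients of elements of a power span\<close>

lemma cancel_leading_term:
  fixes K :: "'a::field set"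
  assumes K: "is_subfield K" and "Y \<in> polys_over K" "V \<in> polys_over K" "V \<noteq> 0"
    and "degree V \<le> degree Y"
  obtains M where "M \<in> polys_over K" "degree (Y - M * V) < degree Y \<or> Y - M * V = 0"
proof -
  define M where "M = monom (lead_coeff Y / lead_coeff V) (degree Y - degree V)"
  have "M \<in> polys_over K"
    unfolding M_def using assms(2,3)
    by (intro polys_over_monom[OF K] is_subfield_divide[OF K]) (auto simp: polys_over_def)
  moreover have "degree (Y - M * V) < degree Y \<or> Y - M * V = 0"
  proof (cases "Y = 0")
    case False
    have deg: "degree (M * V) = degree Y"
      using False assms(4,5) by (simp add: M_def degree_mult_eq degree_monom_eq)
    have "lead_coeff (M * V) = lead_coeff M * lead_coeff V"
      by (rule lead_coeff_mult)
    also have "\<dots> = lead_coeff Y"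
      using False assms(4) by (simp add: M_def degree_monom_eq)
    finally have "degree (M * V) = degree Y" "lead_coeff (M * V) = lead_coeff Y"
      using deg by simp_all
    then have le: "degree (Y - M * V) \<le> degree Y" and "coeff (Y - M * V) (degree Y) = 0"
      by (simp_all add: degree_diff_le)
    then have "Y - M * V \<noteq> 0 \<Longrightarrow> degree (Y - M * V) \<noteq> degree Y"
      by (metis leading_coeff_0_iff)
    then show ?thesis
      using le by linarith
  qed (simp add: M_def)
  ultimately show ?thesis
    using that by blast
qed

definition lowest_terms :: "'a::field set \<Rightarrow> 'a poly \<Rightarrow> 'a poly \<Rightarrow> bool" where
  "lowest_terms K U V \<longleftrightarrow> U \<in> polys_over K \<and> V \<in> polys_over K \<and> U \<noteq> 0 \<and> V \<noteq> 0 \<and>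
     \<not> (\<exists>X\<in>polys_over K. \<exists>Y\<in>polys_over K.
          Y \<noteq> 0 \<and> X * V = Y * U \<and> degree Y < degree V \<and> degree X < degree U)"

lemma lowest_terms_degree_le:
  assumes UV: "lowest_terms K U V"
    and "X \<in> polys_over K" "Y \<in> polys_over K" "X * V = Y * U" "Y \<noteq> 0"
  shows "degree V \<le> degree Y"
proof (rule ccontr)
  assume le: "\<not> degree V \<le> degree Y"
  have "U \<noteq> 0" "V \<noteq> 0"
    using UV by (simp_all add: lowest_terms_def)
  moreover have "X \<noteq> 0"
    using assms(4,5) \<open>U \<noteq> 0\<close> by auto
  ultimately have "degree X + degree V = degree Y + degree U"
    using assms(4,5) by (metis degree_mult_eq)
  then have "degree Y < degree V" "degree X < degree U"
    using le by auto
  then show False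
    using UV assms(2-5) unfolding lowest_terms_def by blast
qed

lemma lowest_terms_dvd:
  fixes K :: "'a::field set"
  assumes K: "is_subfield K" and UV: "lowest_terms K U V"
    and "X \<in> polys_over K" "Y \<in> polys_over K" "X * V = Y * U"
  shows "\<exists>H\<in>polys_over K. Y = H * V \<and> X = H * U"
  using assms(3-)
proof (induction "degree Y" arbitrary: X Y rule: less_induct)
  case less
  have U: "U \<in> polys_over K" "U \<noteq> 0" and V: "V \<in> polys_over K" "V \<noteq> 0"
    using UV by (auto simp: lowest_terms_def)
  show ?case
  proof (cases "Y = 0")
    case True
    then show ?thesis
      using less.prems V polys_over_0[OF K] by (intro bexI[of _ 0]) auto
  next
    case False
    then have "degree V \<le> degree Y"
      by (rule lowest_terms_degree_le[OF UV less.prems])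
    then obtain M where M: "M \<in> polys_over K" "degree (Y - M * V) < degree Y \<or> Y - M * V = 0"
      using cancel_leading_term[OF K less.prems(2) V] by blast
    show ?thesis
      using M(2)
    proof
      assume "degree (Y - M * V) < degree Y"
      moreover have "(X - M * U) * V = (Y - M * V) * U"
        using less.prems(3) by (simp add: algebra_simps)
      moreover have "X - M * U \<in> polys_over K" "Y - M * V \<in> polys_over K"
        using less.prems M U V by (auto intro!: polys_over_diff[OF K] polys_over_mult[OF K])
      ultimately obtain H where "H \<in> polys_over K" "Y - M * V = H * V" "X - M * U = H * U"
        using less.hyps by blast
      then show ?thesis
        using M(1) by (intro bexI[of _ "H + M"] polys_over_add[OF K]) (auto simp: algebra_simps)
    next
      assume "Y - M * V = 0"
      then have "X * V = (M * U) * V"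
        using less.prems(3) by (simp add: algebra_simps)
      then show ?thesis
        using \<open>Y - M * V = 0\<close> M(1) V(2) by (intro bexI[of _ M]) auto
    qed
  qed
qed

definition common_vectors :: "'a::comm_semiring_1 set \<Rightarrow> 'a \<Rightarrow> 'a \<Rightarrow> nat \<Rightarrow> 'a set" where
  "common_vectors K lam \<alpha> N = {v \<in> power_span K lam N. \<alpha> * v \<in> power_span K lam N}"

lemma zero_in_common_vectors: "is_subfield K \<Longrightarrow> 0 \<in> common_vectors K lam \<alpha> N"
  unfolding common_vectors_def using is_subspace_0[OF is_subspace_power_span] by simp

lemma common_vectors_ne_0I:
  assumes "X \<in> polys_below K N" "Y \<in> polys_below K N" "poly Y lam \<noteq> 0"
    and "poly X lam = \<alpha> * poly Y lam"
  shows "common_vectors K lam \<alpha> N \<noteq> {0}"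
proof -
  have "poly Y lam \<in> power_span K lam N" "poly X lam \<in> power_span K lam N"
    unfolding power_span_def using assms(1,2) by auto
  then have "poly Y lam \<in> common_vectors K lam \<alpha> N"
    unfolding common_vectors_def using assms(4) by simp
  then show ?thesis
    using assms(3) by blast
qed

context
  fixes K :: "'a::{field,finite} set" and lam \<alpha> :: 'a and t :: nat and U V :: "'a poly"
  assumes K: "is_subfield K" and card_L: "card (field_adjoin K lam) = card K ^ t"
    and UV: "lowest_terms K U V" and V_lam: "poly V lam \<noteq> 0" and U_lam: "poly U lam = \<alpha> * poly V lam"
begin

lemma mult_image_power_span_subset_common_vectors:
  assumes e: "max (degree U) (degree V) = e" and "e < N"
  shows "(\<lambda>h. poly V lam * h) ` power_span K lam (N - e) \<subseteq> common_vectors K lam \<alpha> N"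
proof
  fix v assume "v \<in> (\<lambda>h. poly V lam * h) ` power_span K lam (N - e)"
  then obtain H where H: "H \<in> polys_below K (N - e)" and v: "v = poly V lam * poly H lam"
    unfolding power_span_def by blast
  have U: "U \<in> polys_below K (Suc e)" and V: "V \<in> polys_below K (Suc e)"
    using UV e by (auto simp: lowest_terms_def polys_below_iff)
  have "Suc e + (N - e) - 1 = N"
    using \<open>e < N\<close> by simp
  then have "V * H \<in> polys_below K N" "U * H \<in> polys_below K N"
    using polys_below_mult[OF K V H] polys_below_mult[OF K U H] by simp_all
  moreover have "v = poly (V * H) lam" "\<alpha> * v = poly (U * H) lam"
    using v U_lam by simp_all
  ultimately show "v \<in> common_vectors K lam \<alpha> N"
    unfolding common_vectors_def power_span_def by blast
qed

lemma common_vectors_subset_mult_image: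
  assumes e: "max (degree U) (degree V) = e" and "N + e \<le> t"
  shows "common_vectors K lam \<alpha> N \<subseteq> (\<lambda>h. poly V lam * h) ` power_span K lam (N - e)"
proof
  have U: "U \<in> polys_below K (Suc e)" and V: "V \<in> polys_below K (Suc e)"
    using UV e by (auto simp: lowest_terms_def polys_below_iff)
  fix v assume "v \<in> common_vectors K lam \<alpha> N"
  then have "v \<in> power_span K lam N" "\<alpha> * v \<in> power_span K lam N"
    unfolding common_vectors_def by simp_all
  then obtain X Y where XY: "X \<in> polys_below K N" "Y \<in> polys_below K N"
      "poly Y lam = v" "poly X lam = \<alpha> * v"
    unfolding power_span_def by (metis imageE)
  have "N + Suc e - 1 \<le> t"
    using \<open>N + e \<le> t\<close> by simp
  then have XV: "X * V \<in> polys_below K t" and YU: "Y * U \<in> polys_below K t"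
    using polys_below_mult[OF K XY(1) V] polys_below_mult[OF K XY(2) U]
    by (simp_all add: polys_below_mono)
  have "poly (X * V) lam = poly (Y * U) lam"
    using XY U_lam by (simp add: mult_ac)
  then have "X * V = Y * U"
    by (rule inj_onD[OF inj_on_poly_polys_below[OF K card_L order_refl] _ XV YU])
  moreover have "X \<in> polys_over K" "Y \<in> polys_over K"
    using XY(1,2) by (simp_all add: polys_below_iff)
  ultimately obtain H where H: "H \<in> polys_over K" "Y = H * V" "X = H * U"
    using lowest_terms_dvd[OF K UV] by blast
  have "H \<in> polys_below K (N - e)"
  proof (cases "H = 0")
    case False
    have "U \<noteq> 0" "V \<noteq> 0"
      using UV by (simp_all add: lowest_terms_def)
    then have "degree Y = degree H + degree V" "degree X = degree H + degree U"
        "Y \<noteq> 0" "X \<noteq> 0"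
      using H False by (simp_all add: degree_mult_eq)
    then have "degree H + max (degree U) (degree V) < N"
      using XY(1,2) by (auto simp: polys_below_iff max_def)
    then have "degree H < N - e"
      using e by linarith
    then show ?thesis
      using H(1) by (simp add: polys_below_iff)
  qed (simp add: polys_below_0[OF K])
  moreover have "v = poly V lam * poly H lam"
    using XY(3) H(2) by (simp add: mult.commute)
  ultimately show "v \<in> (\<lambda>h. poly V lam * h) ` power_span K lam (N - e)"
    unfolding power_span_def by blast
qed

lemma common_vectors_eq_image:
  assumes "max (degree U) (degree V) = e" and "e < N" "N + e \<le> t"
  shows "common_vectors K lam \<alpha> N = (\<lambda>h. poly V lam * h) ` power_span K lam (N - e)"
  by (rule subset_antisym[OF common_vectors_subset_mult_image[OF assms(1,3)]
        mult_image_power_span_subset_common_vectors[OF assms(1,2)]])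

lemma card_common_vectors_eq:
  assumes "max (degree U) (degree V) = e" and "e < N" "N + e \<le> t"
  shows "card (common_vectors K lam \<alpha> N) = card K ^ (N - e)"
proof -
  have "card (common_vectors K lam \<alpha> N) = card (power_span K lam (N - e))"
    unfolding common_vectors_eq_image[OF assms] using V_lam by (intro card_image inj_onI) auto
  also have "\<dots> = card K ^ (N - e)"
    using card_power_span[OF K card_L] assms by simp
  finally show ?thesis .
qed

end

text \<open>The least \<open>j < m\<close> such that \<open>\<alpha>\<close> is a quotient of two elements of
  \<open>power_span K lam (Suc j)\<close>, and m if there is none.\<close>

definition level :: "'a::comm_semiring_1 set \<Rightarrow> 'a \<Rightarrow> nat \<Rightarrow> 'a \<Rightarrow> nat" where
  "level K lam m \<alpha> = (LEAST j. j = m \<or> common_vectors K lam \<alpha> (Suc j) \<noteq> {0})"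

lemma level_le: "level K lam m \<alpha> \<le> m"
  unfolding level_def by (rule Least_le) simp

lemma common_vectors_level:
  "level K lam m \<alpha> < m \<Longrightarrow> common_vectors K lam \<alpha> (Suc (level K lam m \<alpha>)) \<noteq> {0}"
  using LeastI[of "\<lambda>j. j = m \<or> common_vectors K lam \<alpha> (Suc j) \<noteq> {0}" m]
  unfolding level_def by auto

lemma common_vectors_below_level:
  "j < level K lam m \<alpha> \<Longrightarrow> common_vectors K lam \<alpha> (Suc j) = {0}"
  using not_less_Least[of j "\<lambda>j. j = m \<or> common_vectors K lam \<alpha> (Suc j) \<noteq> {0}"]
  unfolding level_def by blast

context
  fixes K :: "'a::{field,finite} set" and lam :: 'a and t :: nat
  assumes K: "is_subfield K" and card_L: "card (field_adjoin K lam) = card K ^ t"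
begin

lemma common_vectors_ne_0_if_ratio:
  assumes XY: "X \<in> polys_over K" "Y \<in> polys_over K" "Y \<noteq> 0" "max (degree X) (degree Y) < t"
    and "X * V = Y * U" and V: "poly V lam \<noteq> 0" and U: "poly U lam = \<alpha> * poly V lam"
  shows "common_vectors K lam \<alpha> (Suc (max (degree X) (degree Y))) \<noteq> {0}"
proof (rule common_vectors_ne_0I)
  show "X \<in> polys_below K (Suc (max (degree X) (degree Y)))"
    "Y \<in> polys_below K (Suc (max (degree X) (degree Y)))"
    using XY(1,2) by (simp_all add: polys_below_iff less_Suc_eq_le)
  have "Y \<in> polys_below K t"
    using XY by (simp add: polys_below_iff)
  then show "poly Y lam \<noteq> 0"
    using poly_eq_0_if_in_polys_below[OF K card_L] XY(3) by blast
  have "poly X lam * poly V lam = (\<alpha> * poly Y lam) * poly V lam"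
    using arg_cong[OF \<open>X * V = Y * U\<close>, of "\<lambda>p. poly p lam"] U by (simp add: mult_ac)
  then show "poly X lam = \<alpha> * poly Y lam"
    using V by simp
qed

lemma level_le_ratio_degree:
  assumes "X \<in> polys_over K" "Y \<in> polys_over K" "Y \<noteq> 0" "X * V = Y * U"
    and "poly V lam \<noteq> 0" "poly U lam = \<alpha> * poly V lam"
    and "max (degree X) (degree Y) < m" "m \<le> t"
  shows "level K lam m \<alpha> \<le> max (degree X) (degree Y)"
proof -
  have "common_vectors K lam \<alpha> (Suc (max (degree X) (degree Y))) \<noteq> {0}"
    using assms by (intro common_vectors_ne_0_if_ratio[where U = U and V = V]) auto
  then show ?thesis
    using common_vectors_below_level[of "max (degree X) (degree Y)" K lam m \<alpha>] by force
qed

lemma lowest_terms_level: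
  assumes "\<alpha> \<noteq> 0" and "level K lam m \<alpha> < m" and "m \<le> t"
  obtains U V where "lowest_terms K U V" "poly V lam \<noteq> 0" "poly U lam = \<alpha> * poly V lam"
    "max (degree U) (degree V) = level K lam m \<alpha>"
proof -
  let ?e = "level K lam m \<alpha>"
  have "\<not> common_vectors K lam \<alpha> (Suc ?e) \<subseteq> {0}"
    using common_vectors_level[OF assms(2)] zero_in_common_vectors[OF K] by auto
  then obtain v where "v \<in> common_vectors K lam \<alpha> (Suc ?e)" "v \<noteq> 0"
    by auto
  then have "v \<in> power_span K lam (Suc ?e)" "\<alpha> * v \<in> power_span K lam (Suc ?e)"
    unfolding common_vectors_def by simp_all
  then obtain U V where UV: "U \<in> polys_below K (Suc ?e)" "V \<in> polys_below K (Suc ?e)"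
      "poly V lam = v" "poly U lam = \<alpha> * v"
    unfolding power_span_def by (auto simp: image_iff)
  then have "V \<noteq> 0" "U \<noteq> 0" "U \<in> polys_over K" "V \<in> polys_over K"
    using \<open>v \<noteq> 0\<close> \<open>\<alpha> \<noteq> 0\<close> by (auto simp: polys_below_iff)
  then have "max (degree U) (degree V) \<le> ?e"
    using UV(1,2) by (simp add: polys_below_iff)
  moreover have "?e \<le> max (degree U) (degree V)"
    using UV assms(2,3) \<open>V \<noteq> 0\<close> \<open>v \<noteq> 0\<close> calculation \<open>U \<in> polys_over K\<close> \<open>V \<in> polys_over K\<close>
    by (intro level_le_ratio_degree[where U = U and V = V]) auto
  ultimately have max_eq: "max (degree U) (degree V) = ?e"
    by (rule antisym)
  have "\<not> (\<exists>X\<in>polys_over K. \<exists>Y\<in>polys_over K.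
    Y \<noteq> 0 \<and> X * V = Y * U \<and> degree Y < degree V \<and> degree X < degree U)"
  proof
    assume "\<exists>X\<in>polys_over K. \<exists>Y\<in>polys_over K.
      Y \<noteq> 0 \<and> X * V = Y * U \<and> degree Y < degree V \<and> degree X < degree U"
    then obtain X Y where XY: "X \<in> polys_over K" "Y \<in> polys_over K" "Y \<noteq> 0" "X * V = Y * U"
        "degree Y < degree V" "degree X < degree U"
      by blast
    have "max (degree X) (degree Y) < ?e"
      using XY(5,6) max_eq by (auto simp: max_def split: if_splits)
    moreover have "?e \<le> max (degree X) (degree Y)"
      using XY UV assms(2,3) \<open>v \<noteq> 0\<close> calculation
      by (intro level_le_ratio_degree[where U = U and V = V]) auto
    ultimately show False
      by linarith
  qed
  then have "lowest_terms K U V"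
    unfolding lowest_terms_def using \<open>U \<in> polys_over K\<close> \<open>V \<in> polys_over K\<close> \<open>U \<noteq> 0\<close> \<open>V \<noteq> 0\<close>
    by blast
  then show ?thesis
    using that UV max_eq \<open>v \<noteq> 0\<close> by blast
qed

lemma card_common_vectors:
  assumes "\<alpha> \<noteq> 0" and "1 \<le> N" "N \<le> m" "2 * m \<le> t"
  shows "card (common_vectors K lam \<alpha> N)
    = (if level K lam m \<alpha> < N then card K ^ (N - level K lam m \<alpha>) else 1)"
proof (cases "level K lam m \<alpha> < N")
  case True
  have "level K lam m \<alpha> < m" "m \<le> t"
    using True assms(3,4) by simp_all
  then obtain U V where "lowest_terms K U V" "poly V lam \<noteq> 0" "poly U lam = \<alpha> * poly V lam"
      "max (degree U) (degree V) = level K lam m \<alpha>"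
    by (rule lowest_terms_level[OF assms(1)])
  then have "card (common_vectors K lam \<alpha> N) = card K ^ (N - level K lam m \<alpha>)"
    using True assms(3,4) level_le[of K lam m \<alpha>]
    by (intro card_common_vectors_eq[OF K card_L]) auto
  then show ?thesis
    using True by simp
next
  case False
  then have "common_vectors K lam \<alpha> (Suc (N - 1)) = {0}"
    using assms(2) common_vectors_below_level[of "N - 1" K lam m \<alpha>] by simp
  then show ?thesis
    using False assms(2) by simp
qed

end

section \<open>Counting quotients by level\<close>

context
  fixes K :: "'a::{field,finite} set" and lam :: 'a and t :: nat
  assumes K: "is_subfield K" and card_L: "card (field_adjoin K lam) = card K ^ t"
begin

text \<open>Count the pairs \<open>(u, v)\<close> of nonzero elements of \<open>power_span K lam N\<close> by their
  quotient \<open>\<alpha> = u / v\<close>.\<close>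

lemma sum_card_common_vectors:
  assumes "N \<le> t"
  shows "(\<Sum>\<alpha>\<in>field_adjoin K lam - {0}. card (common_vectors K lam \<alpha> N - {0}))
    = (card K ^ N - 1) * (card K ^ N - 1)"
proof -
  let ?L = "field_adjoin K lam" and ?W = "power_span K lam N"
  define A where "A = Sigma (?L - {0}) (\<lambda>\<alpha>. common_vectors K lam \<alpha> N - {0})"
  define f where "f = (\<lambda>(\<alpha>, v). (\<alpha> * v, v :: 'a))"
  have "inj_on f A"
    unfolding A_def f_def by (rule inj_onI) auto
  moreover have "f ` A = (?W - {0}) \<times> (?W - {0})"
  proof
    show "f ` A \<subseteq> (?W - {0}) \<times> (?W - {0})"
      unfolding A_def f_def common_vectors_def by auto
  next
    show "(?W - {0}) \<times> (?W - {0}) \<subseteq> f ` A"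
    proof (rule subrelI)
      fix u v assume "(u, v) \<in> (?W - {0}) \<times> (?W - {0})"
      then have uv: "u \<in> ?W" "u \<noteq> 0" "v \<in> ?W" "v \<noteq> 0"
        by auto
      then have "u / v \<in> ?L"
        using power_span_subset_field_adjoin[OF K]
        by (intro is_subfield_divide[OF is_subfield_field_adjoin[OF K]]) auto
      moreover have "u / v * v = u"
        using uv by simp
      ultimately have "(u / v, v) \<in> A"
        unfolding A_def common_vectors_def using uv by auto
      then show "(u, v) \<in> f ` A"
        unfolding f_def using \<open>u / v * v = u\<close> by (intro image_eqI[of _ _ "(u / v, v)"]) auto
    qed
  qed
  ultimately have "card A = card ((?W - {0}) \<times> (?W - {0}))"
    using card_image by fastforce
  moreover have "card A = (\<Sum>\<alpha>\<in>?L - {0}. card (common_vectors K lam \<alpha> N - {0}))"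
    unfolding A_def by (rule card_SigmaI) auto
  moreover have "card (?W - {0}) = card K ^ N - 1"
    using card_power_span[OF K card_L assms] is_subspace_0[OF is_subspace_power_span[OF K]] by simp
  ultimately show ?thesis
    by (simp add: card_cartesian_product)
qed

lemma level_count_equation:
  assumes "1 \<le> N" "N \<le> m" "2 * m \<le> t"
  shows "(\<Sum>j<N. card {\<alpha> \<in> field_adjoin K lam - {0}. level K lam m \<alpha> = j} * (card K ^ (N - j) - 1))
    = (card K ^ N - 1) * (card K ^ N - 1)"
proof -
  let ?L = "field_adjoin K lam"
  let ?c = "\<lambda>j. card {\<alpha> \<in> ?L - {0}. level K lam m \<alpha> = j}"
  define g where "g j = (if j < N then card K ^ (N - j) - 1 else 0)" for j
  have "(\<Sum>\<alpha>\<in>?L - {0}. card (common_vectors K lam \<alpha> N - {0})) = (\<Sum>\<alpha>\<in>?L - {0}. g (level K lam m \<alpha>))"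
    using card_common_vectors[OF K card_L _ assms] zero_in_common_vectors[OF K]
    by (intro sum.cong refl) (simp add: g_def)
  also have "\<dots> = (\<Sum>j\<le>m. \<Sum>\<alpha>\<in>{\<alpha> \<in> ?L - {0}. level K lam m \<alpha> = j}. g (level K lam m \<alpha>))"
    by (rule sum.group[symmetric]) (auto simp: level_le)
  also have "\<dots> = (\<Sum>j\<le>m. ?c j * g j)"
    by (intro sum.cong refl) simp
  also have "\<dots> = (\<Sum>j<N. ?c j * g j)"
    using assms by (intro sum.mono_neutral_right) (auto simp: g_def)
  also have "\<dots> = (\<Sum>j<N. ?c j * (card K ^ (N - j) - 1))"
    by (intro sum.cong refl) (simp add: g_def)
  finally show ?thesis
    using sum_card_common_vectors[of N] assms by simp
qed

end

text \<open>The unique solution of the triangular system given by \<open>level_count_equation\<close>.\<close>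

definition level_count :: "real \<Rightarrow> nat \<Rightarrow> real" where
  "level_count q j = (if j = 0 then q - 1 else (q\<^sup>2 - 1) * q ^ (2 * j - 1))"

lemma sum_level_count: "(\<Sum>j<Suc M. level_count q j) = q ^ (2 * M + 1) - 1"
proof (induction M)
  case (Suc M)
  have "(\<Sum>j<Suc (Suc M). level_count q j) = q ^ (2 * M + 1) - 1 + (q\<^sup>2 - 1) * q ^ (2 * M + 1)"
    using Suc by (simp add: level_count_def)
  also have "\<dots> = q ^ (2 * Suc M + 1) - 1"
    by (simp add: algebra_simps power_add power2_eq_square)
  finally show ?case .
qed (simp add: level_count_def)

lemma sum_level_count_weighted:
  "(\<Sum>j<Suc M. level_count q j * q ^ (Suc M - j)) = q ^ (2 * M + 2) + q ^ (2 * M + 1) - 2 * q ^ (M + 1)"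
proof (induction M)
  case (Suc M)
  have "(\<Sum>j<Suc M. level_count q j * q ^ (Suc (Suc M) - j))
      = q * (\<Sum>j<Suc M. level_count q j * q ^ (Suc M - j))"
    unfolding sum_distrib_left by (intro sum.cong refl) (simp add: Suc_diff_le)
  then have "(\<Sum>j<Suc (Suc M). level_count q j * q ^ (Suc (Suc M) - j))
      = q * (q ^ (2 * M + 2) + q ^ (2 * M + 1) - 2 * q ^ (M + 1)) + level_count q (Suc M) * q"
    using Suc by simp
  then show ?case
    by (simp add: level_count_def algebra_simps power_add power2_eq_square)
qed (simp add: level_count_def algebra_simps power2_eq_square)

lemma level_count_identity:
  "(\<Sum>j<Suc M. level_count q j * (q ^ (Suc M - j) - 1)) = (q ^ Suc M - 1)\<^sup>2"
proof -
  have "(\<Sum>j<Suc M. level_count q j * (q ^ (Suc M - j) - 1))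
      = (\<Sum>j<Suc M. level_count q j * q ^ (Suc M - j)) - (\<Sum>j<Suc M. level_count q j)"
    by (simp add: sum_subtractf right_diff_distrib)
  also have "\<dots> = (q ^ Suc M - 1)\<^sup>2"
    unfolding sum_level_count_weighted sum_level_count
    by (simp add: algebra_simps power2_eq_square power_add power_mult)
  finally show ?thesis .
qed

lemma level_count_unique:
  fixes c :: "nat \<Rightarrow> nat" and q m :: nat
  assumes q: "q \<ge> 2"
    and eqs: "\<And>N. 1 \<le> N \<Longrightarrow> N \<le> m \<Longrightarrow> (\<Sum>j<N. c j * (q ^ (N - j) - 1)) = (q ^ N - 1) * (q ^ N - 1)"
  shows "j < m \<Longrightarrow> real (c j) = level_count (real q) j"
proof (induction j rule: less_induct)
  case (less j)
  have real_diff: "real (q ^ k - 1) = real q ^ k - 1" for k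
    using q one_le_power[of q k] by simp
  have "real (\<Sum>i<Suc j. c i * (q ^ (Suc j - i) - 1)) = real ((q ^ Suc j - 1) * (q ^ Suc j - 1))"
    using eqs[of "Suc j"] less.prems by simp
  then have "(\<Sum>i<Suc j. real (c i) * (real q ^ (Suc j - i) - 1)) = (real q ^ Suc j - 1)\<^sup>2"
    by (simp only: of_nat_sum of_nat_mult real_diff power2_eq_square)
  then have "(\<Sum>i<j. real (c i) * (real q ^ (Suc j - i) - 1)) + real (c j) * (real q - 1)
      = (real q ^ Suc j - 1)\<^sup>2"
    by simp
  moreover have "(\<Sum>i<j. real (c i) * (real q ^ (Suc j - i) - 1))
      = (\<Sum>i<j. level_count (real q) i * (real q ^ (Suc j - i) - 1))"
    using less.IH less.prems by (intro sum.cong refl) auto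
  moreover have "(\<Sum>i<j. level_count (real q) i * (real q ^ (Suc j - i) - 1))
      + level_count (real q) j * (real q - 1) = (real q ^ Suc j - 1)\<^sup>2"
    using level_count_identity[of "real q" j] by simp
  ultimately have "real (c j) * (real q - 1) = level_count (real q) j * (real q - 1)"
    by linarith
  moreover have "real q - 1 \<noteq> 0"
    using q by simp
  ultimately show ?case
    by simp
qed

section \<open>Counting in subspaces\<close>

lemma card_mult_image: "\<alpha> \<noteq> 0 \<Longrightarrow> card ((\<lambda>x. \<alpha> * x) ` V) = card V"
  for \<alpha> :: "'a::field"
  by (intro card_image inj_onI) auto

lemma card_fibers_eq:
  assumes "finite A" and "\<And>y. y \<in> f ` A \<Longrightarrow> card {x \<in> A. f x = y} = c"
  shows "card A = card (f ` A) * c"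
proof -
  have "card A = (\<Sum>x\<in>A. 1)"
    by simp
  also have "\<dots> = (\<Sum>y\<in>f ` A. \<Sum>x\<in>{x \<in> A. f x = y}. 1)"
    by (rule sum.group[symmetric]) (use assms(1) in auto)
  also have "\<dots> = (\<Sum>y\<in>f ` A. c)"
    using assms(2) by (intro sum.cong refl) simp
  finally show ?thesis
    by simp
qed

context
  fixes K :: "'a::{field,finite} set"
  assumes K: "is_subfield K"
begin

text \<open>The fibres of the addition map \<open>U \<times> A \<rightarrow> U + A\<close> are the translates of \<open>U \<inter> A\<close>.\<close>

lemma card_subspace_sum:
  assumes U: "is_subspace K U" and A: "is_subspace K A"
  shows "card U * card A = card {u + a | u a. u \<in> U \<and> a \<in> A} * card (U \<inter> A)"
proof -
  let ?P = "{u + a | u a. u \<in> U \<and> a \<in> A}"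
  have "card (U \<times> A) = card ((\<lambda>(u, a). u + a) ` (U \<times> A)) * card (U \<inter> A)"
  proof (rule card_fibers_eq)
    fix z assume "z \<in> (\<lambda>(u, a). u + a) ` (U \<times> A)"
    then obtain u0 a0 where z: "z = u0 + a0" "u0 \<in> U" "a0 \<in> A"
      by auto
    have "{x \<in> U \<times> A. (\<lambda>(u, a). u + a) x = z} = (\<lambda>c. (u0 + c, a0 - c)) ` (U \<inter> A)"
    proof
      show "{x \<in> U \<times> A. (\<lambda>(u, a). u + a) x = z} \<subseteq> (\<lambda>c. (u0 + c, a0 - c)) ` (U \<inter> A)"
      proof
        fix x assume "x \<in> {x \<in> U \<times> A. (\<lambda>(u, a). u + a) x = z}"
        then obtain u a where x: "x = (u, a)" and ua: "u \<in> U" "a \<in> A" "u + a = z"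
          by auto
        have "u - u0 \<in> U" "a0 - a \<in> A" "u - u0 = a0 - a"
          using is_subspace_diff[OF K U ua(1) z(2)] is_subspace_diff[OF K A z(3) ua(2)] ua(3) z(1)
          by (simp_all add: algebra_simps)
        moreover have "x = (u0 + (u - u0), a0 - (u - u0))"
          using x ua(3) z(1) by (simp add: algebra_simps)
        ultimately show "x \<in> (\<lambda>c. (u0 + c, a0 - c)) ` (U \<inter> A)"
          by (intro image_eqI[of _ _ "u - u0"]) auto
      qed
      show "(\<lambda>c. (u0 + c, a0 - c)) ` (U \<inter> A) \<subseteq> {x \<in> U \<times> A. (\<lambda>(u, a). u + a) x = z}"
        using is_subspace_add[OF U z(2)] is_subspace_diff[OF K A z(3)] z(1) by auto
    qed
    also have "card \<dots> = card (U \<inter> A)"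
      by (intro card_image inj_onI) auto
    finally show "card {x \<in> U \<times> A. (\<lambda>(u, a). u + a) x = z} = card (U \<inter> A)" .
  qed simp
  moreover have "(\<lambda>(u, a). u + a) ` (U \<times> A) = ?P"
    by auto
  ultimately show ?thesis
    by (simp add: card_cartesian_product)
qed

lemma card_subspace_Int_ge:
  assumes "is_subspace K U" "is_subspace K A" "is_subspace K B" "U \<subseteq> B" "A \<subseteq> B"
  shows "card U * card A \<le> card B * card (U \<inter> A)"
proof -
  have "{u + a | u a. u \<in> U \<and> a \<in> A} \<subseteq> B"
    using assms(3-5) is_subspace_add[OF assms(3)] by blast
  then have "card {u + a | u a. u \<in> U \<and> a \<in> A} \<le> card B"
    by (intro card_mono) auto
  then show ?thesis
    unfolding card_subspace_sum[OF assms(1,2)] by (rule mult_right_mono) simp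
qed

lemma card_subspace_Int_ge_index:
  assumes "is_subspace K U" "is_subspace K A" "is_subspace K B" "U \<subseteq> B" "A \<subseteq> B"
    and "card B = c * card A"
  shows "card U \<le> c * card (U \<inter> A)"
proof -
  have "card U * card A \<le> (c * card (U \<inter> A)) * card A"
    using card_subspace_Int_ge[OF assms(1-5)] assms(6) by (simp add: algebra_simps)
  moreover have "card A > 0"
    using is_subspace_0[OF assms(2)] by (auto simp: card_gt_0_iff)
  ultimately show ?thesis
    by simp
qed

lemma is_subfield_stabilizer:
  assumes V: "is_subspace K V"
  shows "is_subfield {\<gamma>. (\<lambda>x. \<gamma> * x) ` V \<subseteq> V}"
proof (rule is_subfieldI_finite)
  show "0 \<in> {\<gamma>. (\<lambda>x. \<gamma> * x) ` V \<subseteq> V}" "1 \<in> {\<gamma>. (\<lambda>x. \<gamma> * x) ` V \<subseteq> V}"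
    using is_subspace_0[OF V] by auto
  fix x y assume "x \<in> {\<gamma>. (\<lambda>x. \<gamma> * x) ` V \<subseteq> V}" "y \<in> {\<gamma>. (\<lambda>x. \<gamma> * x) ` V \<subseteq> V}"
  then have x: "\<And>v. v \<in> V \<Longrightarrow> x * v \<in> V" and y: "\<And>v. v \<in> V \<Longrightarrow> y * v \<in> V"
    by auto
  show "x + y \<in> {\<gamma>. (\<lambda>x. \<gamma> * x) ` V \<subseteq> V}"
    using is_subspace_add[OF V x y] by (auto simp: distrib_right)
  show "x * y \<in> {\<gamma>. (\<lambda>x. \<gamma> * x) ` V \<subseteq> V}"
    using x y by (auto simp: mult.assoc)
  show "- x \<in> {\<gamma>. (\<lambda>x. \<gamma> * x) ` V \<subseteq> V}"
    using is_subspace_uminus[OF K V x] by auto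
qed

end

section \<open>The orbit code of S\<close>

locale orbit_construction =
  fixes Fq :: "'a::{field,finite} set" and q n t l m k :: nat and lam b :: 'a and Sbar S :: "'a set"
  assumes card_UNIV: "card (UNIV :: 'a set) = q ^ n"
    and Fq: "is_subfield Fq" and card_Fq: "card Fq = q"
    and t_def: "t = dim_over Fq (field_adjoin Fq lam)"
    and Sbar: "is_subspace (field_adjoin Fq lam) Sbar"
    and dim_Sbar: "dim_over (field_adjoin Fq lam) Sbar = l" and l_pos: "l > 0"
    and t_eq: "t = 2 * m + 1" and m_pos: "m > 0"
    and k_def: "k = t * l + m" and k_le_n: "k \<le> n"
    and S_def: "S = {x + b * w | x w. x \<in> Sbar \<and> w \<in> span_over Fq {lam ^ j | j. j < m}}"
    and span_S: "span_over (field_adjoin Fq lam) S = UNIV"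
    and FWS: "is_FWS Fq k S (t * l - 1)"
begin

abbreviation "L \<equiv> field_adjoin Fq lam"
abbreviation "W \<equiv> power_span Fq lam m"

lemma L: "is_subfield L"
  by (rule is_subfield_field_adjoin[OF Fq])

lemma q_ge_2: "q \<ge> 2"
  using is_subfield_card_ge_2[OF Fq] card_Fq by simp

lemma q_power_eq_iff: "q ^ a = q ^ c \<longleftrightarrow> a = c"
  using q_ge_2 by simp

lemma q_power_less_iff: "q ^ a < q ^ c \<longleftrightarrow> a < c"
  using q_ge_2 by simp

lemma q_power_le_iff: "q ^ a \<le> q ^ c \<longleftrightarrow> a \<le> c"
  using q_ge_2 by simp

lemma card_L: "card L = q ^ t"
  using card_is_subspace[OF Fq is_subspace_subfield[OF Fq L field_adjoin_base]] t_def card_Fq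
  by simp

lemma card_Sbar: "card Sbar = q ^ (t * l)"
  using card_is_subspace[OF L Sbar] dim_Sbar card_L by (simp add: power_mult)

lemma card_W: "card W = q ^ m"
  using card_power_span[OF Fq, of lam t m] card_L card_Fq t_eq by simp

lemma S_eq: "S = {x + b * w | x w. x \<in> Sbar \<and> w \<in> W}"
  unfolding S_def power_span_eq_span_over[OF Fq] ..

lemma W_subset_L: "W \<subseteq> L"
  by (rule power_span_subset_field_adjoin[OF Fq])

lemma Sbar_subset_S: "Sbar \<subseteq> S"
  unfolding S_eq using is_subspace_0[OF is_subspace_power_span[OF Fq]] by force

text \<open>If \<open>b \<in> Sbar\<close>, then S would lie in the L-subspace Sbar, which is too small to span
  the whole field; hence \<open>Sbar \<inter> b L = {0}\<close>.\<close>

lemma decomposition_unique: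
  assumes "x1 \<in> Sbar" "x2 \<in> Sbar" "w1 \<in> L" "w2 \<in> L" "x1 + b * w1 = x2 + b * w2"
  shows "x1 = x2 \<and> w1 = w2"
proof (rule ccontr)
  assume "\<not> (x1 = x2 \<and> w1 = w2)"
  then have "w2 - w1 \<noteq> 0"
    using assms(5) by auto
  have "b * (w2 - w1) = x1 - x2"
    using assms(5) by (simp add: algebra_simps)
  then have "b * (w2 - w1) \<in> Sbar"
    using is_subspace_diff[OF L Sbar assms(1,2)] by simp
  then have "inverse (w2 - w1) * (b * (w2 - w1)) \<in> Sbar"
    using is_subspace_scale[OF Sbar] is_subfield_inverse[OF L] is_subfield_diff[OF L assms(4,3)]
    by blast
  moreover have "inverse (w2 - w1) * (b * (w2 - w1)) = b"
    using \<open>w2 - w1 \<noteq> 0\<close> by simp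
  ultimately have "b \<in> Sbar"
    by simp
  then have "S \<subseteq> Sbar"
    unfolding S_eq using W_subset_L is_subspace_add[OF Sbar] is_subspace_scale[OF Sbar]
    by (force simp: mult.commute)
  then have "Sbar = UNIV"
    using span_over_minimal[OF Sbar] span_S by blast
  then have "n = t * l"
    using card_UNIV card_Sbar q_power_eq_iff by simp
  then show False
    using k_def k_le_n m_pos by simp
qed

lemma card_decomposition:
  assumes "A \<subseteq> L"
  shows "card ((\<lambda>(x, w). x + b * w) ` (Sbar \<times> A)) = card Sbar * card A"
proof -
  have "inj_on (\<lambda>(x, w). x + b * w) (Sbar \<times> A)"
  proof (rule inj_onI)
    fix p p' assume "p \<in> Sbar \<times> A" "p' \<in> Sbar \<times> A"
      "(\<lambda>(x, w). x + b * w) p = (\<lambda>(x, w). x + b * w) p'"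
    then show "p = p'"
      using decomposition_unique[of "fst p" "fst p'" "snd p" "snd p'"] assms
      by (cases p, cases p') auto
  qed
  then show ?thesis
    by (simp add: card_image card_cartesian_product)
qed

lemma card_S: "card S = q ^ k"
proof -
  have "S = (\<lambda>(x, w). x + b * w) ` (Sbar \<times> W)"
    unfolding S_eq by auto
  then show ?thesis
    using card_decomposition[OF W_subset_L] card_Sbar card_W k_def by (simp add: power_add)
qed

lemma n_eq: "n = t * (l + 1)"
proof -
  let ?T = "(\<lambda>(x, w). x + b * w) ` (Sbar \<times> L)"
  have "is_subspace L ?T"
    unfolding is_subspace_def
  proof (intro conjI ballI)
    show "0 \<in> ?T"
      using is_subspace_0[OF Sbar] is_subfield_0[OF L] by force
  next
    fix y z assume "y \<in> ?T" "z \<in> ?T"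
    then obtain x1 w1 x2 w2 where "x1 \<in> Sbar" "x2 \<in> Sbar" "w1 \<in> L" "w2 \<in> L"
        "y = x1 + b * w1" "z = x2 + b * w2"
      by auto
    then show "y + z \<in> ?T"
      using is_subspace_add[OF Sbar] is_subfield_add[OF L]
      by (intro image_eqI[of _ _ "(x1 + x2, w1 + w2)"]) (auto simp: algebra_simps)
  next
    fix c z assume "c \<in> L" "z \<in> ?T"
    then obtain x w where "x \<in> Sbar" "w \<in> L" "z = x + b * w"
      by auto
    moreover have "c * x \<in> Sbar" "c * w \<in> L"
      using is_subspace_scale[OF Sbar \<open>c \<in> L\<close>] is_subfield_mult[OF L \<open>c \<in> L\<close>] calculation
      by simp_all
    ultimately show "c * z \<in> ?T"
      by (intro image_eqI[of _ _ "(c * x, c * w)"]) (auto simp: algebra_simps)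
  qed
  moreover have "S \<subseteq> ?T"
    unfolding S_eq using W_subset_L by auto
  ultimately have "?T = UNIV"
    using span_over_minimal span_S by blast
  then have "q ^ n = q ^ (t * l + t)"
    using card_decomposition[of L] card_UNIV card_Sbar card_L by (simp add: power_add)
  then show ?thesis
    using q_power_eq_iff by simp
qed

lemma is_subspace_S: "is_subspace Fq S"
  unfolding is_subspace_def S_eq
proof (intro conjI ballI)
  have W: "is_subspace Fq W"
    by (rule is_subspace_power_span[OF Fq])
  have Sbar_Fq: "is_subspace Fq Sbar"
    by (rule is_subspace_subset_scalars[OF field_adjoin_base Sbar])
  show "0 \<in> {x + b * w | x w. x \<in> Sbar \<and> w \<in> W}"
    using is_subspace_0[OF Sbar] is_subspace_0[OF W] by force
  fix y z assume "y \<in> {x + b * w | x w. x \<in> Sbar \<and> w \<in> W}" "z \<in> {x + b * w | x w. x \<in> Sbar \<and> w \<in> W}"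
  then obtain x1 w1 x2 w2 where "x1 \<in> Sbar" "x2 \<in> Sbar" "w1 \<in> W" "w2 \<in> W"
      "y = x1 + b * w1" "z = x2 + b * w2"
    by blast
  then have "y + z = (x1 + x2) + b * (w1 + w2)" "x1 + x2 \<in> Sbar" "w1 + w2 \<in> W"
    using is_subspace_add[OF Sbar] is_subspace_add[OF W] by (auto simp: algebra_simps)
  then show "y + z \<in> {x + b * w | x w. x \<in> Sbar \<and> w \<in> W}"
    by blast
next
  fix c z assume "c \<in> Fq" "z \<in> {x + b * w | x w. x \<in> Sbar \<and> w \<in> W}"
  then obtain x w where "x \<in> Sbar" "w \<in> W" "z = x + b * w"
    by blast
  then have "c * z = c * x + b * (c * w)" "c * x \<in> Sbar" "c * w \<in> W"
    using \<open>c \<in> Fq\<close> is_subspace_scale[OF is_subspace_subset_scalars[OF field_adjoin_base Sbar]]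
      is_subspace_scale[OF is_subspace_power_span[OF Fq]] by (auto simp: algebra_simps)
  then show "c * z \<in> {x + b * w | x w. x \<in> Sbar \<and> w \<in> W}"
    by blast
qed

lemma Int_mult_image_L:
  assumes "\<alpha> \<in> L" "\<alpha> \<noteq> 0"
  shows "S \<inter> (\<lambda>x. \<alpha> * x) ` S = (\<lambda>(x, w). x + b * w) ` (Sbar \<times> (W \<inter> (\<lambda>x. \<alpha> * x) ` W))"
proof
  show "S \<inter> (\<lambda>x. \<alpha> * x) ` S \<subseteq> (\<lambda>(x, w). x + b * w) ` (Sbar \<times> (W \<inter> (\<lambda>x. \<alpha> * x) ` W))"
  proof
    fix z assume "z \<in> S \<inter> (\<lambda>x. \<alpha> * x) ` S"
    then obtain x1 w1 x2 w2 where "x1 \<in> Sbar" "w1 \<in> W" "x2 \<in> Sbar" "w2 \<in> W"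
        and z: "z = x1 + b * w1" "z = \<alpha> * (x2 + b * w2)"
      unfolding S_eq by blast
    moreover have "\<alpha> * x2 \<in> Sbar" "\<alpha> * w2 \<in> L"
      using calculation assms(1) W_subset_L is_subspace_scale[OF Sbar] is_subfield_mult[OF L] by auto
    moreover have "x1 + b * w1 = \<alpha> * x2 + b * (\<alpha> * w2)"
      using z by (simp add: algebra_simps)
    ultimately have "w1 = \<alpha> * w2"
      using decomposition_unique W_subset_L by blast
    then show "z \<in> (\<lambda>(x, w). x + b * w) ` (Sbar \<times> (W \<inter> (\<lambda>x. \<alpha> * x) ` W))"
      using \<open>x1 \<in> Sbar\<close> \<open>w1 \<in> W\<close> \<open>w2 \<in> W\<close> z(1) by auto
  qed
  show "(\<lambda>(x, w). x + b * w) ` (Sbar \<times> (W \<inter> (\<lambda>x. \<alpha> * x) ` W)) \<subseteq> S \<inter> (\<lambda>x. \<alpha> * x) ` S"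
  proof
    fix z assume "z \<in> (\<lambda>(x, w). x + b * w) ` (Sbar \<times> (W \<inter> (\<lambda>x. \<alpha> * x) ` W))"
    then obtain x w where "x \<in> Sbar" "\<alpha> * w \<in> W" "w \<in> W" and z: "z = x + b * (\<alpha> * w)"
      by auto
    then have "z \<in> S"
      unfolding S_eq by blast
    have "inverse \<alpha> * x + b * w \<in> S"
      unfolding S_eq using is_subspace_scale[OF Sbar is_subfield_inverse[OF L assms(1)] \<open>x \<in> Sbar\<close>]
        \<open>w \<in> W\<close> by blast
    moreover have "z = \<alpha> * (inverse \<alpha> * x + b * w)"
      using z assms(2) by (simp add: algebra_simps)
    ultimately show "z \<in> S \<inter> (\<lambda>x. \<alpha> * x) ` S"
      using \<open>z \<in> S\<close> by blast
  qed
qed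

lemma card_Int_mult_image_L:
  assumes "\<alpha> \<in> L" "\<alpha> \<noteq> 0"
  shows "card (S \<inter> (\<lambda>x. \<alpha> * x) ` S) = q ^ (k - level Fq lam m \<alpha>)"
proof -
  have "W \<inter> (\<lambda>x. \<alpha> * x) ` W = (\<lambda>v. \<alpha> * v) ` common_vectors Fq lam \<alpha> m"
    unfolding common_vectors_def by auto
  then have "card (W \<inter> (\<lambda>x. \<alpha> * x) ` W) = card (common_vectors Fq lam \<alpha> m)"
    using card_mult_image[OF assms(2)] by simp
  also have "\<dots> = (if level Fq lam m \<alpha> < m then card Fq ^ (m - level Fq lam m \<alpha>) else 1)"
    using card_L card_Fq t_eq m_pos by (intro card_common_vectors[OF Fq _ assms(2), where t = t]) simp_all
  also have "\<dots> = q ^ (m - level Fq lam m \<alpha>)"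
    using level_le[of Fq lam m \<alpha>] card_Fq by simp
  finally have "card (S \<inter> (\<lambda>x. \<alpha> * x) ` S) = q ^ (t * l) * q ^ (m - level Fq lam m \<alpha>)"
    unfolding Int_mult_image_L[OF assms] using card_decomposition[of "W \<inter> (\<lambda>x. \<alpha> * x) ` W"]
      W_subset_L card_Sbar by auto
  then show ?thesis
    using level_le[of Fq lam m \<alpha>] k_def by (simp flip: power_add)
qed

text \<open>The multipliers stabilising Sbar form a field M between L and the whole field, and both
  Sbar and the whole field are M-spaces; comparing sizes, \<open>[M : L]\<close> divides both l and
  \<open>l + 1\<close>, so M = L.\<close>

lemma mult_image_Sbar_not_L:
  assumes "\<alpha> \<notin> L"
  shows "(\<lambda>x. \<alpha> * x) ` Sbar \<noteq> Sbar"
proof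
  assume eq: "(\<lambda>x. \<alpha> * x) ` Sbar = Sbar"
  define M where "M = {\<gamma>. (\<lambda>x. \<gamma> * x) ` Sbar \<subseteq> Sbar}"
  have M: "is_subfield M"
    unfolding M_def by (rule is_subfield_stabilizer[OF L Sbar])
  have "L \<subseteq> M" "\<alpha> \<in> M"
    unfolding M_def using is_subspace_scale[OF Sbar] eq by auto
  have "is_subspace M Sbar"
    unfolding is_subspace_def M_def using is_subspace_0[OF Sbar] is_subspace_add[OF Sbar] by blast
  moreover have "is_subspace M UNIV"
    by (simp add: is_subspace_def)
  ultimately have "card Sbar = card M ^ dim_over M Sbar" "card (UNIV :: 'a set) = card M ^ dim_over M UNIV"
    using card_is_subspace[OF M] by blast+
  moreover have "card M = q ^ (t * dim_over L M)"
    using card_is_subspace[OF L is_subspace_subfield[OF L M \<open>L \<subseteq> M\<close>]] card_L by (simp add: power_mult)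
  ultimately have eq: "t * l = t * (dim_over L M * dim_over M Sbar)"
      "t * (l + 1) = t * (dim_over L M * dim_over M UNIV)"
    using card_Sbar card_UNIV n_eq q_power_eq_iff by (simp_all add: power_mult[symmetric] mult.assoc)
  moreover have "t \<noteq> 0"
    using t_eq by simp
  then have "l = dim_over L M * dim_over M Sbar" "l + 1 = dim_over L M * dim_over M UNIV"
    using mult_left_cancel eq by blast+
  then have "dim_over L M dvd l" "dim_over L M dvd l + 1"
    by (metis dvd_triv_left)+
  then have "dim_over L M dvd 1"
    by (metis dvd_add_right_iff)
  then have "dim_over L M = 1"
    by simp
  then have "card M = card L"
    using card_L \<open>card M = q ^ (t * dim_over L M)\<close> by simp
  then have "M = L"
    using \<open>L \<subseteq> M\<close> by (intro card_subset_eq[symmetric]) auto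
  then show False
    using \<open>\<alpha> \<in> M\<close> assms by simp
qed

lemma card_Sbar_Int_mult_image_le:
  assumes "\<alpha> \<notin> L"
  shows "card (Sbar \<inter> (\<lambda>x. \<alpha> * x) ` Sbar) \<le> q ^ (t * (l - 1))"
proof -
  have "\<alpha> \<noteq> 0"
    using assms is_subfield_0[OF L] by auto
  let ?I = "Sbar \<inter> (\<lambda>x. \<alpha> * x) ` Sbar"
  have card_I: "card ?I = q ^ (t * dim_over L ?I)"
    using card_is_subspace[OF L is_subspace_Int[OF Sbar is_subspace_mult_image[OF Sbar]]] card_L
    by (simp add: power_mult)
  have "Sbar \<noteq> ?I"
  proof
    assume "Sbar = ?I"
    then have "Sbar \<subseteq> (\<lambda>x. \<alpha> * x) ` Sbar"
      by blast
    then have "Sbar = (\<lambda>x. \<alpha> * x) ` Sbar"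
      using card_mult_image[OF \<open>\<alpha> \<noteq> 0\<close>] by (intro card_subset_eq) auto
    then show False
      using mult_image_Sbar_not_L[OF assms] by simp
  qed
  then have "card ?I < card Sbar"
    by (intro psubset_card_mono) auto
  then have "dim_over L ?I < l"
    using card_I card_Sbar q_power_less_iff by simp
  then have "t * dim_over L ?I \<le> t * (l - 1)"
    by (intro mult_le_mono2) linarith
  then show ?thesis
    using card_I q_power_le_iff by simp
qed

lemma card_Int_mult_image_not_L_le:
  assumes "\<alpha> \<notin> L"
  shows "card (S \<inter> (\<lambda>x. \<alpha> * x) ` S) \<le> q ^ (t * l - 1)"
proof -
  have "\<alpha> \<noteq> 0"
    using assms is_subfield_0[OF L] by auto
  let ?U = "S \<inter> (\<lambda>x. \<alpha> * x) ` S" and ?aS = "(\<lambda>x. \<alpha> * x) ` S" and ?aSbar = "(\<lambda>x. \<alpha> * x) ` Sbar"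
  have Sbar_Fq: "is_subspace Fq Sbar"
    by (rule is_subspace_subset_scalars[OF field_adjoin_base Sbar])
  have U: "is_subspace Fq ?U"
    by (rule is_subspace_Int[OF is_subspace_S is_subspace_mult_image[OF is_subspace_S]])
  have card_S_index: "card S = q ^ m * card Sbar" "card ?aS = q ^ m * card ?aSbar"
    using card_S card_Sbar card_mult_image[OF \<open>\<alpha> \<noteq> 0\<close>] k_def by (simp_all add: power_add)
  have "card ?U \<le> q ^ m * card (?U \<inter> Sbar)"
    using Sbar_subset_S card_S_index(1)
    by (intro card_subspace_Int_ge_index[OF Fq U Sbar_Fq is_subspace_S]) auto
  moreover have "card (?U \<inter> Sbar) \<le> q ^ m * card ((?U \<inter> Sbar) \<inter> ?aSbar)"
    using Sbar_subset_S card_S_index(2)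
    by (intro card_subspace_Int_ge_index[OF Fq is_subspace_Int[OF U Sbar_Fq]
          is_subspace_mult_image[OF Sbar_Fq] is_subspace_mult_image[OF is_subspace_S]]) auto
  moreover have "card ((?U \<inter> Sbar) \<inter> ?aSbar) \<le> card (Sbar \<inter> ?aSbar)"
    by (intro card_mono) auto
  ultimately have "card ?U \<le> q ^ m * (q ^ m * q ^ (t * (l - 1)))"
    using card_Sbar_Int_mult_image_le[OF assms] by (meson le_trans mult_le_mono2)
  also have "\<dots> = q ^ (t * l - 1)"
    using t_eq l_pos by (cases l) (simp_all add: algebra_simps flip: power_add)
  finally show ?thesis .
qed

lemma subspace_dist_S:
  assumes "is_subspace Fq V" "card (S \<inter> V) = q ^ d" "d \<le> k"
  shows "subspace_dist Fq k S V = 2 * (k - d)"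
proof -
  have "dim_over Fq (S \<inter> V) = d"
    using dim_over_eqI[OF Fq is_subspace_Int[OF is_subspace_S assms(1)]] assms(2) card_Fq by simp
  then show ?thesis
    unfolding subspace_dist_def using assms(3) by simp
qed

text \<open>Here the hypothesis that the code is \<open>(t l - 1)\<close>-FWS enters: it forbids an
  intersection of dimension below \<open>t l - 1\<close>.\<close>

lemma card_Int_mult_image_not_L:
  assumes "\<alpha> \<notin> L"
  shows "card (S \<inter> (\<lambda>x. \<alpha> * x) ` S) = q ^ (t * l - 1)"
proof -
  have "\<alpha> \<noteq> 0"
    using assms is_subfield_0[OF L] by auto
  let ?V = "(\<lambda>x. \<alpha> * x) ` S"
  have V: "is_subspace Fq ?V"
    by (rule is_subspace_mult_image[OF is_subspace_S])
  define d where "d = dim_over Fq (S \<inter> ?V)"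
  have card_d: "card (S \<inter> ?V) = q ^ d"
    using card_is_subspace[OF Fq is_subspace_Int[OF is_subspace_S V]] card_Fq by (simp add: d_def)
  have "\<not> d < t * l - 1"
  proof
    assume "d < t * l - 1"
    then have "k - d \<in> {k - (t * l - 1) + 1..k}" "d \<le> k"
      using k_def by auto
    then have "weight Fq k S (k - d) = 0"
      using FWS unfolding is_FWS_def by blast
    moreover have "?V \<in> {V \<in> Orb S. subspace_dist Fq k S V = 2 * (k - d)}"
      using subspace_dist_S[OF V card_d \<open>d \<le> k\<close>] \<open>\<alpha> \<noteq> 0\<close> unfolding Orb_def by blast
    ultimately show False
      unfolding weight_def by (auto simp: card_eq_0_iff)
  qed
  moreover have "d \<le> t * l - 1"
    using card_Int_mult_image_not_L_le[OF assms] card_d q_power_le_iff by simp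
  ultimately show ?thesis
    using card_d by simp
qed

definition half_distance :: "'a \<Rightarrow> nat" where
  "half_distance \<alpha> = (if \<alpha> \<in> L then level Fq lam m \<alpha> else m + 1)"

lemma half_distance_le: "half_distance \<alpha> \<le> m + 1"
  using level_le[of Fq lam m \<alpha>] by (simp add: half_distance_def)

lemma m_less_k: "m < k"
  using k_def t_eq l_pos by (simp add: Suc_le_eq)

lemma card_Int_mult_image:
  assumes "\<alpha> \<noteq> 0"
  shows "card (S \<inter> (\<lambda>x. \<alpha> * x) ` S) = q ^ (k - half_distance \<alpha>)"
proof (cases "\<alpha> \<in> L")
  case True
  then show ?thesis
    using card_Int_mult_image_L[OF True assms] by (simp add: half_distance_def)
next
  case False
  have "t * l - 1 = k - (m + 1)"
    using k_def t_eq l_pos by (cases l) simp_all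
  then show ?thesis
    using card_Int_mult_image_not_L[OF False] False by (simp add: half_distance_def)
qed

lemma subspace_dist_mult_image:
  assumes "\<alpha> \<noteq> 0"
  shows "subspace_dist Fq k S ((\<lambda>x. \<alpha> * x) ` S) = 2 * half_distance \<alpha>"
  using subspace_dist_S[OF is_subspace_mult_image[OF is_subspace_S] card_Int_mult_image[OF assms]]
    half_distance_le[of \<alpha>] m_less_k by simp

lemma mult_image_S_eq_iff:
  assumes "\<gamma> \<noteq> 0"
  shows "(\<lambda>x. \<gamma> * x) ` S = S \<longleftrightarrow> \<gamma> \<in> Fq"
proof
  assume "\<gamma> \<in> Fq"
  then have "(\<lambda>x. \<gamma> * x) ` S \<subseteq> S"
    using is_subspace_scale[OF is_subspace_S] by blast
  then show "(\<lambda>x. \<gamma> * x) ` S = S"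
    using card_mult_image[OF assms] by (intro card_subset_eq) auto
next
  assume "(\<lambda>x. \<gamma> * x) ` S = S"
  then have "q ^ k = q ^ (k - half_distance \<gamma>)"
    using card_Int_mult_image[OF assms] card_S by simp
  then have "half_distance \<gamma> = 0"
    using q_power_eq_iff half_distance_le[of \<gamma>] m_less_k by simp
  then have "\<gamma> \<in> L" "level Fq lam m \<gamma> = 0"
    by (auto simp: half_distance_def split: if_splits)
  then have "\<not> common_vectors Fq lam \<gamma> (Suc 0) \<subseteq> {0}"
    using common_vectors_level[of Fq lam m \<gamma>] zero_in_common_vectors[OF Fq] m_pos by auto
  then obtain v where "v \<in> common_vectors Fq lam \<gamma> (Suc 0)" "v \<noteq> 0"
    by auto
  moreover have "power_span Fq lam (Suc 0) = Fq"
    using power_span_1[OF Fq] by simp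
  ultimately have "v \<in> Fq" "v \<noteq> 0" "\<gamma> * v \<in> Fq"
    unfolding common_vectors_def by auto
  then show "\<gamma> \<in> Fq"
    using is_subfield_divide[OF Fq, of "\<gamma> * v" v] by simp
qed

lemma mult_image_S_eq_iff_divide:
  assumes "\<alpha> \<noteq> 0" "\<beta> \<noteq> 0"
  shows "(\<lambda>x. \<beta> * x) ` S = (\<lambda>x. \<alpha> * x) ` S \<longleftrightarrow> \<beta> / \<alpha> \<in> Fq"
proof -
  have "(\<lambda>x. \<beta> * x) ` S = (\<lambda>x. \<alpha> * x) ` ((\<lambda>x. (\<beta> / \<alpha>) * x) ` S)"
    unfolding image_image using assms(1) by (intro image_cong refl) simp
  moreover have "inj (\<lambda>x. \<alpha> * x)"
    using assms(1) by (intro injI) simp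
  ultimately have "(\<lambda>x. \<beta> * x) ` S = (\<lambda>x. \<alpha> * x) ` S \<longleftrightarrow> (\<lambda>x. (\<beta> / \<alpha>) * x) ` S = S"
    by (simp add: inj_image_eq_iff)
  also have "\<dots> \<longleftrightarrow> \<beta> / \<alpha> \<in> Fq"
    using assms by (intro mult_image_S_eq_iff) simp
  finally show ?thesis .
qed

text \<open>Each code word \<open>\<alpha> S\<close> is obtained from exactly the \<open>q - 1\<close> multipliers \<open>\<gamma> \<alpha>\<close>,
  \<open>\<gamma> \<in> Fq - {0}\<close>.\<close>

lemma card_mult_image_S_fiber:
  assumes "\<alpha> \<noteq> 0"
  shows "card {\<beta>. \<beta> \<noteq> 0 \<and> (\<lambda>x. \<beta> * x) ` S = (\<lambda>x. \<alpha> * x) ` S} = q - 1"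
proof -
  have "{\<beta>. \<beta> \<noteq> 0 \<and> (\<lambda>x. \<beta> * x) ` S = (\<lambda>x. \<alpha> * x) ` S} = (\<lambda>\<gamma>. \<gamma> * \<alpha>) ` (Fq - {0})"
  proof
    show "{\<beta>. \<beta> \<noteq> 0 \<and> (\<lambda>x. \<beta> * x) ` S = (\<lambda>x. \<alpha> * x) ` S} \<subseteq> (\<lambda>\<gamma>. \<gamma> * \<alpha>) ` (Fq - {0})"
    proof
      fix \<beta> assume "\<beta> \<in> {\<beta>. \<beta> \<noteq> 0 \<and> (\<lambda>x. \<beta> * x) ` S = (\<lambda>x. \<alpha> * x) ` S}"
      then have "\<beta> / \<alpha> \<in> Fq - {0}" "\<beta> = (\<beta> / \<alpha>) * \<alpha>"
        using mult_image_S_eq_iff_divide[OF assms] assms by auto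
      then show "\<beta> \<in> (\<lambda>\<gamma>. \<gamma> * \<alpha>) ` (Fq - {0})"
        by blast
    qed
    show "(\<lambda>\<gamma>. \<gamma> * \<alpha>) ` (Fq - {0}) \<subseteq> {\<beta>. \<beta> \<noteq> 0 \<and> (\<lambda>x. \<beta> * x) ` S = (\<lambda>x. \<alpha> * x) ` S}"
    proof (rule image_subsetI)
      fix \<gamma> assume "\<gamma> \<in> Fq - {0}"
      then have "\<gamma> * \<alpha> \<noteq> 0" "\<gamma> * \<alpha> / \<alpha> \<in> Fq"
        using assms by auto
      then show "\<gamma> * \<alpha> \<in> {\<beta>. \<beta> \<noteq> 0 \<and> (\<lambda>x. \<beta> * x) ` S = (\<lambda>x. \<alpha> * x) ` S}"
        using mult_image_S_eq_iff_divide[OF assms, of "\<gamma> * \<alpha>"] by simp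
    qed
  qed
  also have "card \<dots> = card (Fq - {0})"
    using assms by (intro card_image inj_onI) auto
  also have "\<dots> = q - 1"
    using card_Fq is_subfield_0[OF Fq] by simp
  finally show ?thesis .
qed

lemma weight_mult_card:
  "weight Fq k S i * (q - 1) = card {\<alpha>. \<alpha> \<noteq> 0 \<and> half_distance \<alpha> = i}"
proof -
  let ?A = "{\<alpha>. \<alpha> \<noteq> 0 \<and> half_distance \<alpha> = i}" and ?f = "\<lambda>\<alpha>. (\<lambda>x. \<alpha> * x) ` S"
  have "{V \<in> Orb S. subspace_dist Fq k S V = 2 * i} = ?f ` ?A"
    unfolding Orb_def using subspace_dist_mult_image by auto
  then have weight: "weight Fq k S i = card (?f ` ?A)"
    by (simp add: weight_def)
  have "card ?A = card (?f ` ?A) * (q - 1)"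
  proof (rule card_fibers_eq)
    fix V assume "V \<in> ?f ` ?A"
    then obtain \<alpha> where \<alpha>: "\<alpha> \<noteq> 0" "half_distance \<alpha> = i" "V = ?f \<alpha>"
      by blast
    have "half_distance \<beta> = i" if "\<beta> \<noteq> 0" "?f \<beta> = ?f \<alpha>" for \<beta>
      using subspace_dist_mult_image[OF that(1)] subspace_dist_mult_image[OF \<alpha>(1)] \<alpha>(2) that(2)
      by simp
    then have "{\<beta> \<in> ?A. ?f \<beta> = V} = {\<beta>. \<beta> \<noteq> 0 \<and> ?f \<beta> = ?f \<alpha>}"
      using \<alpha> by auto
    then show "card {\<beta> \<in> ?A. ?f \<beta> = V} = q - 1"
      using card_mult_image_S_fiber[OF \<alpha>(1)] by simp
  qed simp
  then show ?thesis
    using weight by simp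
qed

lemma card_level_eq_level_count:
  assumes "j < m"
  shows "real (card {\<alpha> \<in> L - {0}. level Fq lam m \<alpha> = j}) = level_count (real q) j"
proof (rule level_count_unique[OF q_ge_2 _ assms])
  fix N assume "1 \<le> N" "N \<le> m"
  then show "(\<Sum>j<N. card {\<alpha> \<in> L - {0}. level Fq lam m \<alpha> = j} * (q ^ (N - j) - 1))
      = (q ^ N - 1) * (q ^ N - 1)"
    using level_count_equation[OF Fq, of lam t N m] card_L card_Fq t_eq by simp
qed

lemma real_weight:
  "real (weight Fq k S i) * (real q - 1) = real (card {\<alpha>. \<alpha> \<noteq> 0 \<and> half_distance \<alpha> = i})"
proof -
  have "real (q - 1) = real q - 1"
    using q_ge_2 by simp
  then show ?thesis
    using weight_mult_card[of i] by (metis of_nat_mult)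
qed

lemma half_distance_eq_level:
  assumes "i \<le> m"
  shows "{\<alpha>. \<alpha> \<noteq> 0 \<and> half_distance \<alpha> = i} = {\<alpha> \<in> L - {0}. level Fq lam m \<alpha> = i}"
  using assms by (auto simp: half_distance_def)

lemma half_distance_eq_Suc_m: "{\<alpha>. \<alpha> \<noteq> 0 \<and> half_distance \<alpha> = m + 1} = UNIV - L"
proof -
  have "half_distance \<alpha> = m + 1 \<longleftrightarrow> \<alpha> \<notin> L" for \<alpha>
    using level_le[of Fq lam m \<alpha>] by (simp add: half_distance_def)
  then show ?thesis
    using is_subfield_0[OF L] by auto
qed

lemma weight_less_m:
  assumes "1 \<le> i" "i < m"
  shows "real (weight Fq k S i) = (real q + 1) * real q ^ (2 * i - 1)"
proof -
  have "real (weight Fq k S i) * (real q - 1) = (real q ^ 2 - 1) * real q ^ (2 * i - 1)"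
    using real_weight[of i] half_distance_eq_level[of i] card_level_eq_level_count[of i] assms
    by (simp add: level_count_def)
  also have "\<dots> = ((real q + 1) * real q ^ (2 * i - 1)) * (real q - 1)"
    by (simp add: algebra_simps power2_eq_square)
  finally show ?thesis
    using q_ge_2 by simp
qed

lemma weight_m: "real (weight Fq k S m) = (real q ^ t - real q ^ (2 * m - 1)) / (real q - 1)"
proof -
  let ?c = "\<lambda>j. card {\<alpha> \<in> L - {0}. level Fq lam m \<alpha> = j}"
  have "card (L - {0}) = (\<Sum>\<alpha>\<in>L - {0}. 1)"
    by simp
  also have "\<dots> = (\<Sum>j\<le>m. \<Sum>\<alpha>\<in>{\<alpha> \<in> L - {0}. level Fq lam m \<alpha> = j}. 1)"
    by (rule sum.group[symmetric]) (auto simp: level_le)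
  finally have "card (L - {0}) = (\<Sum>j\<le>m. ?c j)"
    by simp
  then have "q ^ t - 1 = (\<Sum>j<m. ?c j) + ?c m"
    using card_L is_subfield_0[OF L] by (simp add: lessThan_Suc_atMost[symmetric])
  then have "real (q ^ t - 1) = real ((\<Sum>j<m. ?c j) + ?c m)"
    by (rule arg_cong)
  also have "\<dots> = (\<Sum>j<m. real (?c j)) + real (?c m)"
    by (simp only: of_nat_add of_nat_sum)
  moreover have "real (q ^ t - 1) = real q ^ t - 1"
    using q_ge_2 by simp
  ultimately have "real q ^ t - 1 = (\<Sum>j<m. real (?c j)) + real (?c m)"
    by simp
  also have "(\<Sum>j<m. real (?c j)) = (\<Sum>j<Suc (m - 1). level_count (real q) j)"
    using card_level_eq_level_count m_pos by simp
  also have "\<dots> = real q ^ (2 * (m - 1) + 1) - 1"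
    by (rule sum_level_count)
  also have "2 * (m - 1) + 1 = 2 * m - 1"
    using m_pos by simp
  finally have "real (?c m) = real q ^ t - real q ^ (2 * m - 1)"
    by simp
  then have "real (weight Fq k S m) * (real q - 1) = real q ^ t - real q ^ (2 * m - 1)"
    using real_weight[of m] half_distance_eq_level[of m] by simp
  then show ?thesis
    using q_ge_2 by (simp add: field_simps)
qed

lemma weight_Suc_m: "real (weight Fq k S (m + 1)) = (real q ^ n - real q ^ t) / (real q - 1)"
proof -
  have "card (UNIV - L) = q ^ n - q ^ t"
    using card_UNIV card_L by (simp add: card_Diff_subset)
  moreover have "q ^ t \<le> q ^ n"
    using n_eq q_power_le_iff by simp
  ultimately have "real (weight Fq k S (m + 1)) * (real q - 1) = real q ^ n - real q ^ t"
    using real_weight[of "m + 1"] half_distance_eq_Suc_m by simp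
  then show ?thesis
    using q_ge_2 by (simp add: field_simps)
qed

end

theorem theorem4p10:
  fixes Fq :: "'a::{field,finite} set" and q n t l m k r :: nat
    and lam b :: 'a and Sbar S :: "'a set"
  assumes q_pp: "\<exists>p e. prime p \<and> e > 0 \<and> q = p ^ e"
    and card_field: "card (UNIV :: 'a set) = q ^ n"
    and Fq_sub: "is_subfield Fq" and Fq_card: "card Fq = q"
    and lam: "lam \<notin> Fq"
    and t_def: "t = dim_over Fq (field_adjoin Fq lam)"
    and Sbar_sub: "is_subspace (field_adjoin Fq lam) Sbar"
    and Sbar_dim: "dim_over (field_adjoin Fq lam) Sbar = l" and l_pos: "l > 0"
    and b_nz: "b \<noteq> 0"
    and b_Sbar: "field_adjoin Fq lam \<inter> (\<lambda>x. b * x) ` Sbar = {0}"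
    and m_bounds: "0 < m" "m < t"
    and k_def: "k = t * l + m" and k_bounds: "t + 1 \<le> k" "k \<le> n"
    and S_def: "S = {x + b * w | x w. x \<in> Sbar \<and> w \<in> span_over Fq {lam ^ j | j. j < m}}"
    and S_direct: "Sbar \<inter> (\<lambda>w. b * w) ` span_over Fq {lam ^ j | j. j < m} = {0}"
    and Y_full: "span_over (field_adjoin Fq lam) S = UNIV"
    and m_t: "2 * m + 1 \<ge> t"
    and r_def: "r = 2 * m + t * (l - 1)"
    and FWS: "is_FWS Fq k S r"
    and r_eq: "r = t * l - 1"
  shows "(\<forall>i\<in>{1..m - 1}. real (weight Fq k S i) = (real q + 1) * real q ^ (2 * i - 1))
    \<and> real (weight Fq k S m) = (real q ^ t - real q ^ (2 * m - 1)) / (real q - 1)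
    \<and> real (weight Fq k S (m + 1)) = (real q ^ n - real q ^ t) / (real q - 1)"
proof -
  obtain l' where "l = Suc l'"
    using l_pos by (cases l) auto
  then have "2 * m + t * l' = t + t * l' - 1"
    using r_def r_eq by simp
  then have "t = 2 * m + 1"
    using m_bounds by simp
  moreover have "is_FWS Fq k S (t * l - 1)"
    using FWS r_eq by simp
  ultimately interpret orbit_construction Fq q n t l m k lam b Sbar S
    using card_field Fq_sub Fq_card t_def Sbar_sub Sbar_dim l_pos m_bounds(1) k_def k_bounds(2)
      S_def Y_full
    by unfold_locales simp_all
  have "\<forall>i\<in>{1..m - 1}. real (weight Fq k S i) = (real q + 1) * real q ^ (2 * i - 1)"
  proof
    fix i assume "i \<in> {1..m - 1}"
    then have "1 \<le> i" "i < m"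
      by auto
    then show "real (weight Fq k S i) = (real q + 1) * real q ^ (2 * i - 1)"
      by (rule weight_less_m)
  qed
  then show ?thesis
    using weight_m weight_Suc_m by simp
qed

end
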